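(* Let $n\ge1$, $U=\mathcal{U}(osp(1|2n))$ and $\Omega\subset U$ as defined below. For all $a,b$, $\sigma_{ab}\triangleright\Omega\subset\Omega$, so that under $\triangleright$ the space $\Omega$ is an $sp(2n)$-submodule of $U$. Moreover, $U$ (with the action $\triangleright$ of the $\sigma_{ab}$) and $\mathcal{U}(sp(2n))\otimes\Omega$ (with $sp(2n)$ acting by the adjoint action on $\mathcal{U}(sp(2n))$ and by $\triangleright$ on $\Omega$) are equivalent as $sp(2n)$-modules.
   Context: $\mathcal{U}(osp(1|2n))$ is the associative superalgebra over $\mathbb{C}$ generated by odd elements $\sigma_a$ and even elements $\sigma_{ab}=\sigma_{ba}$ ($1\le a,b\le 2n$) subject to $\{\sigma_a,\sigma_b\}=\sigma_{ab}$, $[\sigma_a,\sigma_{bc}]=-g_{ab}\sigma_c-g_{ac}\sigma_b$, $[\sigma_{ab},\sigma_{cd}]=-g_{ac}\sigma_{bd}-g_{ad}\sigma_{bc}-g_{bc}\sigma_{ad}-g_{bd}\sigma_{ac}$, where $(g_{ab})=\begin{pmatrix}0&-I_n\\ I_n&0\end{pmatrix}$. The $\sigma_{ab}$ span $sp(2n)$ and generate the subalgebra $\mathcal{U}(sp(2n))$. The action $\triangleright$ of generators on homogeneous $x\in U$ is: $\sigma_{ab}\triangleright x=[\sigma_{ab},x]$; $\sigma_a\triangleright x=\{\sigma_a,x\}=\sigma_ax+x\sigma_a$ if $x$ is even; $\sigma_a\triangleright x=[\sigma_a,x]=\sigma_ax-x\sigma_a$ if $x$ is odd (extended linearly). For indices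 $a_1,\dots,a_p\in\{1,\dots,2n\}$, $[a_1\dots a_p]=\sum_{s\in\mathfrak{S}_p}\varepsilon(s)\sigma_{a_{s(1)}}\cdots\sigma_{a_{s(p)}}$ ($[\,]=1$ for $p=0$), and $\Omega$ is the span of these elements for $0\le p\le 2n$. *)

theory Defs
  imports Complex_Main "HOL-Combinatorics.Permutations"
begin

text \<open>The indices 1..2n are modelled by the type 'n + 'n, where n = CARD('n):
  Inl i stands for the index i and Inr i for the index i+n.  Then
  g = [[0,-I],[I,0]] reads g(Inl i, Inr j) = -delta_ij, g(Inr i, Inl j) = delta_ij.\<close>

type_synonym 'n idx = "'n + 'n"

fun gform :: "'n idx \<Rightarrow> 'n idx \<Rightarrow> complex" where
  "gform (Inl i) (Inr j) = (if i = j then -1 else 0)"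
| "gform (Inr i) (Inl j) = (if i = j then 1 else 0)"
| "gform _ _ = 0"

datatype 'n gen = OddG "'n idx" | EvenG "'n idx" "'n idx"

datatype 'n fexpr =
    G "'n gen"
  | Zero_e
  | Onee
  | Ad "'n fexpr" "'n fexpr"
  | Mu "'n fexpr" "'n fexpr"
  | Sc complex "'n fexpr"

definition Sb :: "'n fexpr \<Rightarrow> 'n fexpr \<Rightarrow> 'n fexpr" where
  "Sb x y = Ad x (Sc (-1) y)"

text \<open>The congruence generated by the axioms of unital associative C-algebras
  together with the defining relations of U(osp(1|2n)).  The quotient of the term
  algebra by it is exactly U(osp(1|2n)).\<close>

inductive ocong :: "'n fexpr \<Rightarrow> 'n fexpr \<Rightarrow> bool" where
  refl: "ocong x x"
| sym: "ocong x y \<Longrightarrow> ocong y x"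
| trans: "ocong x y \<Longrightarrow> ocong y z \<Longrightarrow> ocong x z"
| cAd: "ocong x y \<Longrightarrow> ocong x' y' \<Longrightarrow> ocong (Ad x x') (Ad y y')"
| cMu: "ocong x y \<Longrightarrow> ocong x' y' \<Longrightarrow> ocong (Mu x x') (Mu y y')"
| cSc: "ocong x y \<Longrightarrow> ocong (Sc c x) (Sc c y)"
| add_assoc: "ocong (Ad (Ad x y) z) (Ad x (Ad y z))"
| add_comm: "ocong (Ad x y) (Ad y x)"
| add_zero: "ocong (Ad Zero_e x) x"
| add_inv: "ocong (Ad x (Sc (-1) x)) Zero_e"
| sc_add: "ocong (Sc c (Ad x y)) (Ad (Sc c x) (Sc c y))"
| sc_plus: "ocong (Sc (c + d) x) (Ad (Sc c x) (Sc d x))"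
| sc_sc: "ocong (Sc c (Sc d x)) (Sc (c * d) x)"
| sc_one: "ocong (Sc 1 x) x"
| mul_assoc: "ocong (Mu (Mu x y) z) (Mu x (Mu y z))"
| one_l: "ocong (Mu Onee x) x"
| one_r: "ocong (Mu x Onee) x"
| distr_l: "ocong (Mu x (Ad y z)) (Ad (Mu x y) (Mu x z))"
| distr_r: "ocong (Mu (Ad x y) z) (Ad (Mu x z) (Mu y z))"
| sc_mul_l: "ocong (Sc c (Mu x y)) (Mu (Sc c x) y)"
| sc_mul_r: "ocong (Sc c (Mu x y)) (Mu x (Sc c y))"
| rel_sym: "ocong (G (EvenG a b)) (G (EvenG b a))"
| rel_odd_odd: "ocong (Ad (Mu (G (OddG a)) (G (OddG b))) (Mu (G (OddG b)) (G (OddG a))))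
                      (G (EvenG a b))"
| rel_odd_even: "ocong (Sb (Mu (G (OddG a)) (G (EvenG b c))) (Mu (G (EvenG b c)) (G (OddG a))))
                       (Ad (Sc (- gform a b) (G (OddG c))) (Sc (- gform a c) (G (OddG b))))"
| rel_even_even: "ocong (Sb (Mu (G (EvenG a b)) (G (EvenG c d))) (Mu (G (EvenG c d)) (G (EvenG a b))))
                  (Ad (Ad (Sc (- gform a c) (G (EvenG b d))) (Sc (- gform a d) (G (EvenG b c))))
                      (Ad (Sc (- gform b c) (G (EvenG a d))) (Sc (- gform b d) (G (EvenG a c)))))"

lemma equivp_ocong: "equivp ocong"
  by (rule equivpI) (auto simp: reflp_def symp_def transp_def intro: ocong.intros)

quotient_type 'n U = "'n fexpr" / ocong
  by (rule equivp_ocong)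

instantiation U :: (type) ring
begin
lift_definition zero_U :: "'a U" is Zero_e .
lift_definition plus_U :: "'a U \<Rightarrow> 'a U \<Rightarrow> 'a U" is Ad by (rule ocong.cAd)
lift_definition times_U :: "'a U \<Rightarrow> 'a U \<Rightarrow> 'a U" is Mu by (rule ocong.cMu)
lift_definition uminus_U :: "'a U \<Rightarrow> 'a U" is "Sc (-1)" by (rule ocong.cSc)
lift_definition minus_U :: "'a U \<Rightarrow> 'a U \<Rightarrow> 'a U" is Sb
  unfolding Sb_def by (intro ocong.cAd ocong.cSc)
instance
proof
  fix a b c :: "'a U"
  show "a + b + c = a + (b + c)" by transfer (rule ocong.add_assoc)
  show "a + b = b + a" by transfer (rule ocong.add_comm)
  show "0 + a = a" by transfer (rule ocong.add_zero)
  show "- a + a = 0" by transfer (meson ocong.add_comm ocong.add_inv ocong.trans)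
  show "a - b = a + - b" by transfer (simp add: Sb_def ocong.refl)
  show "a * b * c = a * (b * c)" by transfer (rule ocong.mul_assoc)
  show "(a + b) * c = a * c + b * c" by transfer (rule ocong.distr_r)
  show "a * (b + c) = a * b + a * c" by transfer (rule ocong.distr_l)
qed
end

instantiation U :: (type) monoid_mult
begin
lift_definition one_U :: "'a U" is Onee .
instance
proof
  fix a :: "'a U"
  show "1 * a = a" by transfer (rule ocong.one_l)
  show "a * 1 = a" by transfer (rule ocong.one_r)
qed
end

lift_definition scaleU :: "complex \<Rightarrow> 'n U \<Rightarrow> 'n U" is Sc by (rule ocong.cSc)

lift_definition sig :: "'n idx \<Rightarrow> 'n U" is "\<lambda>a. G (OddG a)" .
lift_definition sig2 :: "'n idx \<Rightarrow> 'n idx \<Rightarrow> 'n U" is "\<lambda>a b. G (EvenG a b)" .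

definition uspan :: "'n U set \<Rightarrow> 'n U set" where
  "uspan S = {x. \<exists>F c. finite F \<and> F \<subseteq> S \<and> x = (\<Sum>v\<in>F. scaleU (c v) v)}"

definition act2 :: "'n idx \<Rightarrow> 'n idx \<Rightarrow> 'n U \<Rightarrow> 'n U" where
  "act2 a b x = sig2 a b * x - x * sig2 a b"

definition wedge :: "'n idx list \<Rightarrow> 'n U" where
  "wedge xs = (\<Sum>s\<in>{s. s permutes {..<length xs}}.
      scaleU (of_int (sign s)) (prod_list (map (\<lambda>i. sig (xs ! s i)) [0..<length xs])))"

definition Omega :: "'n U set" where
  "Omega = uspan {wedge xs | xs. length xs \<le> 2 * card (UNIV :: 'n set)}"

inductive_set Usp :: "'n U set" where
  one: "1 \<in> Usp"
| gen: "sig2 a b \<in> Usp"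
| add: "x \<in> Usp \<Longrightarrow> y \<in> Usp \<Longrightarrow> x + y \<in> Usp"
| mul: "x \<in> Usp \<Longrightarrow> y \<in> Usp \<Longrightarrow> x * y \<in> Usp"
| scl: "x \<in> Usp \<Longrightarrow> scaleU c x \<in> Usp"

section \<open>Tensor product A (x) B of two subspaces of U, as free vector space modulo bilinearity\<close>

definition FSp :: "'n U set \<Rightarrow> 'n U set \<Rightarrow> ('n U \<times> 'n U \<Rightarrow> complex) set" where
  "FSp A B = {f. finite {p. f p \<noteq> 0} \<and> {p. f p \<noteq> 0} \<subseteq> A \<times> B}"

definition delta :: "'n U \<Rightarrow> 'n U \<Rightarrow> ('n U \<times> 'n U \<Rightarrow> complex)" where
  "delta x y = (\<lambda>p. if p = (x, y) then 1 else 0)"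

definition bilin_rels :: "'n U set \<Rightarrow> 'n U set \<Rightarrow> ('n U \<times> 'n U \<Rightarrow> complex) set" where
  "bilin_rels A B =
     {(\<lambda>p. delta (x + x') y p - delta x y p - delta x' y p) | x x' y. x \<in> A \<and> x' \<in> A \<and> y \<in> B}
   \<union> {(\<lambda>p. delta x (y + y') p - delta x y p - delta x y' p) | x y y'. x \<in> A \<and> y \<in> B \<and> y' \<in> B}
   \<union> {(\<lambda>p. delta (scaleU c x) y p - c * delta x y p) | c x y. x \<in> A \<and> y \<in> B}
   \<union> {(\<lambda>p. delta x (scaleU c y) p - c * delta x y p) | c x y. x \<in> A \<and> y \<in> B}"

text \<open>The subspace they span (the kernel of FSp A B -> A (x) B).\<close>
definition RelSp :: "'n U set \<Rightarrow> 'n U set \<Rightarrow> ('n U \<times> 'n U \<Rightarrow> complex) set" where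
  "RelSp A B = {f. \<exists>F c. finite F \<and> F \<subseteq> bilin_rels A B \<and> f = (\<lambda>p. \<Sum>r\<in>F. c r * r p)}"

text \<open>U(sp(2n)) (x) Omega, with sp(2n) acting by ad on the first factor and by |> on the
  second, is equivalent to U (with |>) iff there is a linear map Phi from the free space
  FSp onto U whose kernel is exactly RelSp (i.e. a linear isomorphism
  FSp/RelSp = U(sp) (x) Omega -> U) intertwining the actions of all sigma_ab.\<close>
definition sp_equiv_tensor :: "'n U set \<Rightarrow> 'n U set \<Rightarrow> bool" where
  "sp_equiv_tensor A B \<longleftrightarrow>
    (\<exists>Phi :: ('n U \<times> 'n U \<Rightarrow> complex) \<Rightarrow> 'n U.
       (\<forall>f\<in>FSp A B. \<forall>g\<in>FSp A B. Phi (\<lambda>p. f p + g p) = Phi f + Phi g) \<and>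
       (\<forall>f\<in>FSp A B. \<forall>c. Phi (\<lambda>p. c * f p) = scaleU c (Phi f)) \<and>
       Phi ` FSp A B = UNIV \<and>
       (\<forall>f\<in>FSp A B. Phi f = 0 \<longleftrightarrow> f \<in> RelSp A B) \<and>
       (\<forall>a b. \<forall>x\<in>A. \<forall>y\<in>B.
          act2 a b (Phi (delta x y)) = Phi (delta (act2 a b x) y) + Phi (delta x (act2 a b y))))"

end

theory Submission
  imports Defs "HOL-Library.Countable" "HOL-Library.Function_Algebras"
begin

(*
  Spanning is a PBW-type argument: an ordered monomial \<sigma>_w u (u \<in> U(sp(2n))) of degree k
  agrees with the wedge [w]/k! modulo monomials of lower degree, since swapping two adjacent odd
  generators costs \<sigma>_ab \<in> sp(2n), and [\<sigma>_ab, \<sigma>_c] is again odd of degree one; wedges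
  with a repeated index vanish, so U = \<Omega> U(sp(2n)).

  Independence uses a representation of U on the free right U-module M with basis e_J, J ranging
  over the sets of indices.  The odd generators act by \<sigma>_a e_J = e_({a} \<union> J) when a lies below
  min J, and otherwise by the formulas forced by the defining relations, recursively in |J|; the
  relations themselves are then verified by induction on |J|.  As \<sigma>_ab e_\<emptyset> = e_\<emptyset> \<sigma>_ab, the
  map x \<mapsto> x e_\<emptyset> is right U(sp(2n))-linear, and [I] e_\<emptyset> = |I|! e_I + (terms e_K, |K| < |I|).
  Comparing coefficients at a maximal I shows that \<Sum>_I [I] u_I = 0 forces all u_I = 0.

  The isomorphism U(sp(2n)) \<otimes> \<Omega> \<rightarrow> U is u \<otimes> w \<mapsto> w u; it intertwines the actions
  because \<sigma>_ab \<triangleright> is a derivation.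
*)

section \<open>Linear structure of U\<close>

lemma scaleU_add_right: "scaleU c (x + y) = scaleU c x + scaleU c y"
  by transfer (rule ocong.sc_add)
lemma scaleU_add_left: "scaleU (c + d) x = scaleU c x + scaleU d x"
  by transfer (rule ocong.sc_plus)
lemma scaleU_scaleU: "scaleU c (scaleU d x) = scaleU (c * d) x"
  by transfer (rule ocong.sc_sc)
lemma scaleU_one: "scaleU 1 x = x"
  by transfer (rule ocong.sc_one)
lemma scaleU_mult_left: "scaleU c x * y = scaleU c (x * y)"
  by transfer (rule ocong.sym, rule ocong.sc_mul_l)
lemma scaleU_mult_right: "x * scaleU c y = scaleU c (x * y)"
  by transfer (rule ocong.sym, rule ocong.sc_mul_r)

interpretation U_space: vector_space "scaleU :: complex \<Rightarrow> 'n U \<Rightarrow> 'n U"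
  by unfold_locales (rule scaleU_add_right scaleU_add_left scaleU_scaleU scaleU_one)+

lemma uspan_eq_span: "uspan = U_space.span"
  unfolding uspan_def U_space.span_explicit by (rule ext) blast

lemma Omega_eq_span: "(Omega :: 'n U set) = U_space.span {wedge xs | xs. length xs \<le> 2 * card (UNIV :: 'n set)}"
  by (simp add: Omega_def uspan_eq_span)

instantiation U :: (type) real_vector
begin
definition scaleR_U :: "real \<Rightarrow> 'a U \<Rightarrow> 'a U" where
  "scaleR_U r x = scaleU (of_real r) x"
instance
  by standard (simp_all add: scaleR_U_def scaleU_add_right scaleU_add_left)
end

lemma scaleR_U_mult_left [simp]: "scaleR r (x::'n U) * y = scaleR r (x * y)"
  by (simp add: scaleR_U_def scaleU_mult_left)
lemma scaleR_U_mult_right [simp]: "(x::'n U) * scaleR r y = scaleR r (x * y)"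
  by (simp add: scaleR_U_def scaleU_mult_right)
lemma scaleU_scaleR_commute: "scaleU c (scaleR r x) = scaleR r (scaleU c (x::'n U))"
  by (simp add: scaleR_U_def mult.commute)

lemma subspace_Usp: "U_space.subspace Usp"
  by (rule U_space.subspaceI) (use Usp.scl[OF Usp.one, of 0] in \<open>auto intro: Usp.add Usp.scl\<close>)

(* The structure constants g_ab are real, so the relations are restated with scaleR, where the
   simplifier's real_vector normalisation (algebra_simps) applies. *)
fun g_real :: "'n idx \<Rightarrow> 'n idx \<Rightarrow> real" where
  "g_real (Inl i) (Inr j) = (if i = j then -1 else 0)"
| "g_real (Inr i) (Inl j) = (if i = j then 1 else 0)"
| "g_real _ _ = 0"

lemma gform_eq_g_real: "gform a b = complex_of_real (g_real a b)"
  by (cases a; cases b) auto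
lemma g_real_antisym: "g_real b a = - g_real a b"
  by (cases a; cases b) auto
lemma g_real_self [simp]: "g_real a a = 0"
  by (cases a) auto
lemma scaleU_minus_gform: "scaleU (- gform a b) x = scaleR (- g_real a b) x"
  by (simp add: gform_eq_g_real scaleR_U_def)

lemma sig2_sym: "sig2 a b = sig2 b a"
  by transfer (rule ocong.rel_sym)
lemma sig_anticomm: "sig a * sig b + sig b * sig a = sig2 a b"
  by transfer (rule ocong.rel_odd_odd)

lemma sig_sig2_comm_gform:
  "sig a * sig2 b c - sig2 b c * sig a = scaleU (- gform a b) (sig c) + scaleU (- gform a c) (sig b)"
  by transfer (rule ocong.rel_odd_even)
lemma sig2_sig2_comm_gform: "sig2 a b * sig2 c d - sig2 c d * sig2 a b =
   (scaleU (- gform a c) (sig2 b d) + scaleU (- gform a d) (sig2 b c)) +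
   (scaleU (- gform b c) (sig2 a d) + scaleU (- gform b d) (sig2 a c))"
  by transfer (rule ocong.rel_even_even)

lemma sig_sig2_comm:
  "sig a * sig2 b c - sig2 b c * sig a = scaleR (- g_real a b) (sig c) + scaleR (- g_real a c) (sig b)"
  unfolding scaleU_minus_gform[symmetric] by (rule sig_sig2_comm_gform)
lemma sig2_sig2_comm: "sig2 a b * sig2 c d - sig2 c d * sig2 a b =
   scaleR (- g_real a c) (sig2 b d) + scaleR (- g_real a d) (sig2 b c) +
   scaleR (- g_real b c) (sig2 a d) + scaleR (- g_real b d) (sig2 a c)"
proof -
  have "sig2 a b * sig2 c d - sig2 c d * sig2 a b =
      (scaleU (- gform a c) (sig2 b d) + scaleU (- gform a d) (sig2 b c)) +
      (scaleU (- gform b c) (sig2 a d) + scaleU (- gform b d) (sig2 a c))"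
    by (rule sig2_sig2_comm_gform)
  also have "\<dots> = scaleR (- g_real a c) (sig2 b d) + scaleR (- g_real a d) (sig2 b c) +
      scaleR (- g_real b c) (sig2 a d) + scaleR (- g_real b d) (sig2 a c)"
    by (simp only: scaleU_minus_gform add.assoc)
  finally show ?thesis .
qed

section \<open>A linear order on the indices\<close>

definition idx_less :: "'n::finite idx \<Rightarrow> 'n idx \<Rightarrow> bool" where
  "idx_less a b \<longleftrightarrow> to_nat a < to_nat b"
definition idx_below :: "'n::finite idx \<Rightarrow> 'n idx set \<Rightarrow> bool" where
  "idx_below a J \<longleftrightarrow> (\<forall>j\<in>J. idx_less a j)"
definition idx_min :: "'n::finite idx set \<Rightarrow> 'n idx" where
  "idx_min J = from_nat (Min (to_nat ` J))"

lemma to_nat_less_of_le: "to_nat x \<le> to_nat y \<Longrightarrow> x \<noteq> y \<Longrightarrow> to_nat x < to_nat y"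
  using injD[OF inj_to_nat, of x y] by linarith

lemma idx_min_in_and_to_nat:
  assumes "J \<noteq> {}"
  shows "idx_min J \<in> J \<and> to_nat (idx_min J) = Min (to_nat ` J)"
proof -
  have "Min (to_nat ` J) \<in> to_nat ` J" using assms by (intro Min_in) auto
  then obtain j where "j \<in> J" "Min (to_nat ` J) = to_nat j" by blast
  then show ?thesis by (simp add: idx_min_def)
qed

lemma idx_min_in: "J \<noteq> {} \<Longrightarrow> idx_min J \<in> J"
  using idx_min_in_and_to_nat by blast

lemma idx_min_le:
  assumes "j \<in> J" shows "to_nat (idx_min J) \<le> to_nat j"
proof -
  have "to_nat (idx_min J) = Min (to_nat ` J)" using idx_min_in_and_to_nat assms by blast
  also have "\<dots> \<le> to_nat j" using assms by (intro Min_le) auto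
  finally show ?thesis .
qed

lemma idx_below_min: "idx_below (idx_min J) (J - {idx_min J})"
  unfolding idx_below_def idx_less_def
proof
  fix j assume "j \<in> J - {idx_min J}"
  then show "to_nat (idx_min J) < to_nat j"
    using idx_min_le[of j J] to_nat_less_of_le by auto
qed
lemma idx_below_notin: "idx_below a J \<Longrightarrow> a \<notin> J"
  unfolding idx_below_def idx_less_def by auto
lemma idx_min_not_below: "J \<noteq> {} \<Longrightarrow> \<not> idx_below (idx_min J) J"
  unfolding idx_below_def idx_less_def using idx_min_in by blast
lemma insert_idx_min: "J \<noteq> {} \<Longrightarrow> insert (idx_min J) (J - {idx_min J}) = J"
  using idx_min_in by auto
lemma card_idx_min: assumes "J \<noteq> {}" shows "card J = Suc (card (J - {idx_min J}))"
  using card_Suc_Diff1[OF finite idx_min_in[OF assms]] by simp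
lemma idx_less_min_of_not_below:
  assumes "\<not> idx_below a J" "a \<noteq> idx_min J" shows "idx_less (idx_min J) a"
proof -
  obtain j where "j \<in> J" "to_nat j \<le> to_nat a"
    using assms(1) unfolding idx_below_def idx_less_def by auto
  then have "to_nat (idx_min J) \<le> to_nat a" using idx_min_le[of j J] by simp
  then show ?thesis
    using assms(2) to_nat_less_of_le unfolding idx_less_def by auto
qed
lemma idx_min_insert_below:
  assumes "idx_below a J" shows "idx_min (insert a J) = a"
proof -
  have "to_nat (idx_min (insert a J)) \<le> to_nat a" by (rule idx_min_le) simp
  then show ?thesis
    using idx_min_in[of "insert a J"] assms unfolding idx_below_def idx_less_def by auto
qed
lemma idx_below_insert: "idx_below a J \<Longrightarrow> idx_less a b \<Longrightarrow> idx_below a (insert b J)"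
  unfolding idx_below_def by auto

section \<open>The module M and its operators\<close>

(* M is the free right U-module with basis e_J indexed by sets of indices; a right U-linear
   operator is given by the matrix whose column L is the image of e_L. *)

type_synonym 'n M = "'n idx set \<Rightarrow> 'n U"

instantiation "fun" :: (type, real_vector) real_vector
begin
definition scaleR_fun :: "real \<Rightarrow> ('a \<Rightarrow> 'b) \<Rightarrow> 'a \<Rightarrow> 'b" where
  "scaleR_fun r f = (\<lambda>x. scaleR r (f x))"
instance
  by standard (auto simp: scaleR_fun_def fun_eq_iff scaleR_add_right scaleR_add_left)
end

definition single_vec :: "'n idx set \<Rightarrow> 'n U \<Rightarrow> 'n M" where
  "single_vec J u = (\<lambda>K. if K = J then u else 0)"
definition basis_vec :: "'n idx set \<Rightarrow> 'n M" where
  "basis_vec J = single_vec J 1"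
definition mat_app :: "('n::finite idx set \<Rightarrow> 'n M) \<Rightarrow> 'n M \<Rightarrow> 'n M" where
  "mat_app r m = (\<lambda>K. \<Sum>L\<in>UNIV. r L K * m L)"
definition rmult :: "'n M \<Rightarrow> 'n U \<Rightarrow> 'n M" where
  "rmult m u = (\<lambda>K. m K * u)"
definition scaleM :: "complex \<Rightarrow> 'n M \<Rightarrow> 'n M" where
  "scaleM c m = (\<lambda>K. scaleU c (m K))"

lemma basis_vec_apply: "basis_vec J K = (if K = J then 1 else 0)"
  unfolding basis_vec_def single_vec_def by simp

lemma mat_app_basis_vec [simp]: "mat_app r (basis_vec L) = r L"
  unfolding mat_app_def basis_vec_def single_vec_def by (rule ext) (simp add: if_distrib cong: if_cong)
lemma mat_app_single_vec: "mat_app r (single_vec L u) = rmult (r L) u"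
  unfolding mat_app_def rmult_def single_vec_def by (rule ext) (simp add: if_distrib cong: if_cong)
lemma mat_app_add [simp]: "mat_app r (m1 + m2) = mat_app r m1 + mat_app r m2"
  unfolding mat_app_def by (rule ext) (simp add: distrib_left sum.distrib)
lemma mat_app_zero [simp]: "mat_app r 0 = 0"
  unfolding mat_app_def by (rule ext) simp
lemma mat_app_minus [simp]: "mat_app r (- m) = - mat_app r m"
  unfolding mat_app_def by (rule ext) (simp add: sum_negf)
lemma mat_app_diff [simp]: "mat_app r (m1 - m2) = mat_app r m1 - mat_app r m2"
  unfolding mat_app_def by (rule ext) (simp add: right_diff_distrib sum_subtractf)
lemma mat_app_scaleR [simp]: "mat_app r (scaleR c m) = scaleR c (mat_app r m)"
  unfolding mat_app_def scaleR_fun_def by (rule ext) (simp add: scaleR_sum_right)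
lemma mat_app_scaleM: "mat_app r (scaleM c m) = scaleM c (mat_app r m)"
  unfolding mat_app_def scaleM_def by (rule ext) (simp add: scaleU_mult_right U_space.scale_sum_right)
lemma mat_app_rmult: "mat_app r (rmult m u) = rmult (mat_app r m) u"
  unfolding mat_app_def rmult_def by (rule ext) (simp add: sum_distrib_right mult.assoc)

lemma mat_app_mat_app: "mat_app r (mat_app s m) = mat_app (\<lambda>L. mat_app r (s L)) m"
proof (rule ext)
  fix K
  have "mat_app r (mat_app s m) K = (\<Sum>L\<in>UNIV. \<Sum>L'\<in>UNIV. r L K * (s L' L * m L'))"
    unfolding mat_app_def by (simp add: sum_distrib_left)
  also have "\<dots> = (\<Sum>L'\<in>UNIV. \<Sum>L\<in>UNIV. r L K * (s L' L * m L'))"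
    by (rule sum.swap)
  also have "\<dots> = mat_app (\<lambda>L. mat_app r (s L)) m K"
    unfolding mat_app_def by (simp add: sum_distrib_right mult.assoc)
  finally show "mat_app r (mat_app s m) K = mat_app (\<lambda>L. mat_app r (s L)) m K" .
qed

lemma mat_app_cols_add: "mat_app (\<lambda>L. r L + s L) m = mat_app r m + mat_app s m"
  unfolding mat_app_def by (rule ext) (simp add: distrib_right sum.distrib)
lemma mat_app_cols_scaleR: "mat_app (\<lambda>L. scaleR c (r L)) m = scaleR c (mat_app r m)"
  unfolding mat_app_def scaleR_fun_def by (rule ext) (simp add: scaleR_sum_right)
lemma mat_app_cols_scaleM: "mat_app (\<lambda>L. scaleM c (r L)) m = scaleM c (mat_app r m)"
  unfolding mat_app_def scaleM_def by (rule ext) (simp add: scaleU_mult_left U_space.scale_sum_right)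
lemma mat_app_cols_zero: "mat_app (\<lambda>L. 0) m = 0"
  unfolding mat_app_def by (rule ext) simp
lemma mat_app_basis_cols: "mat_app basis_vec m = m"
proof (rule ext)
  fix K
  have "mat_app basis_vec m K = (\<Sum>L\<in>UNIV. if L = K then m L else 0)"
    unfolding mat_app_def basis_vec_apply by (rule sum.cong) auto
  then show "mat_app basis_vec m K = m K" by simp
qed

lemma mat_app_cong: "(\<And>L. m L \<noteq> 0 \<Longrightarrow> r L = s L) \<Longrightarrow> mat_app r m = mat_app s m"
  unfolding mat_app_def by (rule ext, rule sum.cong) (simp, metis mult_zero_right)
lemma mat_app_supp: "mat_app r m K \<noteq> 0 \<Longrightarrow> \<exists>L. m L \<noteq> 0 \<and> r L K \<noteq> 0"
  unfolding mat_app_def by (metis (mono_tags, lifting) mult_zero_left mult_zero_right sum.neutral)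

definition matrix_op :: "('n::finite M \<Rightarrow> 'n M) \<Rightarrow> bool" where
  "matrix_op T \<longleftrightarrow> (\<forall>m. T m = mat_app (\<lambda>L. T (basis_vec L)) m)"

lemma matrix_op_mat_app: "matrix_op (mat_app r)"
  unfolding matrix_op_def by simp
lemma matrix_op_id: "matrix_op (\<lambda>m. m)"
  unfolding matrix_op_def using mat_app_basis_cols by metis
lemma matrix_op_zero: "matrix_op (\<lambda>m. 0)"
  unfolding matrix_op_def using mat_app_cols_zero by (metis zero_fun_def)
lemma matrix_op_comp:
  assumes "matrix_op T1" and "matrix_op T2" shows "matrix_op (\<lambda>m. T1 (T2 m))"
  unfolding matrix_op_def
proof
  fix m
  have "T1 (T2 m) = mat_app (\<lambda>L'. T1 (basis_vec L')) (mat_app (\<lambda>L. T2 (basis_vec L)) m)"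
    using assms unfolding matrix_op_def by metis
  also have "\<dots> = mat_app (\<lambda>L. T1 (T2 (basis_vec L))) m"
    using assms(1) unfolding mat_app_mat_app matrix_op_def by metis
  finally show "T1 (T2 m) = mat_app (\<lambda>L. T1 (T2 (basis_vec L))) m" .
qed
lemma matrix_op_add: "matrix_op T1 \<Longrightarrow> matrix_op T2 \<Longrightarrow> matrix_op (\<lambda>m. T1 m + T2 m)"
  unfolding matrix_op_def mat_app_cols_add by metis
lemma matrix_op_scaleR: "matrix_op T \<Longrightarrow> matrix_op (\<lambda>m. scaleR c (T m))"
  unfolding matrix_op_def mat_app_cols_scaleR by metis
lemma matrix_op_scaleM: "matrix_op T \<Longrightarrow> matrix_op (\<lambda>m. scaleM c (T m))"
  unfolding matrix_op_def mat_app_cols_scaleM by metis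
lemma matrix_op_diff: "matrix_op T1 \<Longrightarrow> matrix_op T2 \<Longrightarrow> matrix_op (\<lambda>m. T1 m - T2 m)"
  using matrix_op_add[of T1 "\<lambda>m. scaleR (-1) (T2 m)"] matrix_op_scaleR[of T2 "-1"] by simp

lemma matrix_op_apply: "matrix_op T \<Longrightarrow> T m = mat_app (\<lambda>L. T (basis_vec L)) m"
  unfolding matrix_op_def by blast

lemma matrix_op_eq_on_supp:
  assumes "matrix_op T1" "matrix_op T2" "\<And>L. m L \<noteq> 0 \<Longrightarrow> T1 (basis_vec L) = T2 (basis_vec L)"
  shows "T1 m = T2 m"
proof -
  have "T1 m = mat_app (\<lambda>L. T1 (basis_vec L)) m" by (rule matrix_op_apply[OF assms(1)])
  also have "\<dots> = mat_app (\<lambda>L. T2 (basis_vec L)) m" by (rule mat_app_cong) (rule assms(3))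
  also have "\<dots> = T2 m" by (rule matrix_op_apply[OF assms(2), symmetric])
  finally show ?thesis .
qed

section \<open>The operators representing the generators\<close>

(*
  Stage k of the table holds the columns e_J, |J| \<le> k, of the operators \<rho>_a (for \<sigma>_a) and
  Q_bc (for \<sigma>_bc).  With i = min J and J' = J - {i}, so that e_J = \<rho>_i e_J', the relations
  force
    Q_bc e_\<emptyset> = e_\<emptyset> \<sigma>_bc,
    \<rho>_a e_J = e_({a} \<union> J)                     (a below J),
    \<rho>_i e_J = Q_ii e_J' / 2,
    \<rho>_a e_J = - \<rho>_i \<rho>_a e_J' + Q_ai e_J'        (a > i),
    Q_bc e_J = \<rho>_i Q_bc e_J' + g(i,b) \<rho>_c e_J' + g(i,c) \<rho>_b e_J'.
  The column of \<rho>_i at a vector of size |J'| + 1 is not yet in the table.  By the degree bounds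
  proved below, the only such vector occurring in \<rho>_a e_J' is e_({a} \<union> J'), whose image
  e_({i, a} \<union> J') is known, and none occurs in Q_bc e_J'; the guards on card L rely on this.
*)

fun col_table :: "nat \<Rightarrow> ('n::finite idx \<Rightarrow> 'n idx set \<Rightarrow> 'n M) \<times> ('n idx \<Rightarrow> 'n idx \<Rightarrow> 'n idx set \<Rightarrow> 'n M)"
where
  "col_table 0 = ((\<lambda>a J. basis_vec (insert a J)), (\<lambda>b c J. single_vec {} (sig2 b c)))"
| "col_table (Suc k) = (let R = fst (col_table k); Q = snd (col_table k) in
    ((\<lambda>a J. if card J \<le> k then R a J else
        (let i = idx_min J; J' = J - {i} in
          if idx_below a J then basis_vec (insert a J)
          else if a = i then scaleR (1/2) (Q a a J')
          else - mat_app (\<lambda>L. if card L \<le> k then R i L else basis_vec (insert i L)) (R a J') + Q a i J')),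
     (\<lambda>b c J. if card J \<le> k then Q b c J else
        (let i = idx_min J; J' = J - {i} in
          mat_app (\<lambda>L. if card L \<le> k then R i L else 0) (Q b c J')
            + scaleR (g_real i b) (R c J') + scaleR (g_real i c) (R b J')))))"

definition odd_col :: "'n::finite idx \<Rightarrow> 'n idx set \<Rightarrow> 'n M" where
  "odd_col a J = fst (col_table (card J)) a J"
definition even_col :: "'n::finite idx \<Rightarrow> 'n idx \<Rightarrow> 'n idx set \<Rightarrow> 'n M" where
  "even_col b c J = snd (col_table (card J)) b c J"

lemma col_table_stable:
  "card J \<le> k \<Longrightarrow> fst (col_table k) a J = odd_col a J \<and> snd (col_table k) b c J = even_col b c J"
proof (induction k)
  case 0
  then show ?case by (simp add: odd_col_def even_col_def)
next
  case (Suc k)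
  then show ?case
    by (cases "card J \<le> k") (simp_all add: Let_def odd_col_def even_col_def le_Suc_eq)
qed

lemma odd_col_empty: "odd_col a {} = basis_vec {a}"
  by (simp add: odd_col_def)
lemma even_col_empty: "even_col b c {} = single_vec {} (sig2 b c)"
  by (simp add: even_col_def)

lemma odd_col_unfold:
  assumes "J \<noteq> {}"
  defines "i \<equiv> idx_min J" and "J' \<equiv> J - {idx_min J}"
  shows "odd_col a J = (if idx_below a J then basis_vec (insert a J)
          else if a = i then scaleR (1/2) (even_col a a J')
          else - mat_app (\<lambda>L. if card L \<le> card J' then odd_col i L else basis_vec (insert i L))
                    (odd_col a J') + even_col a i J')"
proof -
  have "card J = Suc (card J')" using card_idx_min[OF assms(1)] by (simp add: J'_def)
  then show ?thesis
    unfolding odd_col_def[of a J]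
    by (simp add: Let_def col_table_stable i_def J'_def[symmetric] cong: if_cong)
qed

lemma even_col_unfold:
  assumes "J \<noteq> {}"
  defines "i \<equiv> idx_min J" and "J' \<equiv> J - {idx_min J}"
  shows "even_col b c J = mat_app (\<lambda>L. if card L \<le> card J' then odd_col i L else 0) (even_col b c J')
            + scaleR (g_real i b) (odd_col c J') + scaleR (g_real i c) (odd_col b J')"
proof -
  have "card J = Suc (card J')" using card_idx_min[OF assms(1)] by (simp add: J'_def)
  then show ?thesis
    unfolding even_col_def[of b c J]
    by (simp add: Let_def col_table_stable i_def J'_def[symmetric] cong: if_cong)
qed

definition col_degree_bounded :: "'n::finite idx set \<Rightarrow> bool" where
  "col_degree_bounded J \<longleftrightarrow>
     (\<forall>a K. odd_col a J K \<noteq> 0 \<longrightarrow> card K \<le> card J \<or> K = insert a J) \<and>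
     (\<forall>b c K. even_col b c J K \<noteq> 0 \<longrightarrow> card K \<le> card J)"

lemma card_insert_le_Suc: "card (insert x A) \<le> Suc (card A)"
  by (cases "finite A") (simp_all add: card_insert_if)

lemma odd_col_degree_step_above:
  fixes J :: "'n::finite idx set"
  assumes ne: "J \<noteq> {}" and IH: "\<And>L :: 'n idx set. card L < card J \<Longrightarrow> col_degree_bounded L"
  defines "i \<equiv> idx_min J" and "J' \<equiv> J - {idx_min J}"
  assumes K: "mat_app (\<lambda>L. if card L \<le> card J' then odd_col i L else basis_vec (insert i L)) (odd_col a J') K \<noteq> 0"
  shows "card K \<le> card J \<or> K = insert a J"
proof -
  have cJ: "card J = Suc (card J')" using card_idx_min[OF ne] by (simp add: J'_def)
  obtain L where L: "odd_col a J' L \<noteq> 0"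
      "(if card L \<le> card J' then odd_col i L else basis_vec (insert i L)) K \<noteq> 0"
    using mat_app_supp[OF K] by blast
  show ?thesis
  proof (cases "card L \<le> card J'")
    case True
    then have "card K \<le> card L \<or> K = insert i L"
      using L IH[of L] cJ unfolding col_degree_bounded_def by auto
    then show ?thesis using True cJ card_insert_le_Suc[of i L] by auto
  next
    case False
    then have "L = insert a J'" and "K = insert i L"
      using L IH[of J'] cJ unfolding col_degree_bounded_def by (auto simp: basis_vec_apply split: if_splits)
    then show ?thesis using insert_idx_min[OF ne] by (auto simp: i_def J'_def)
  qed
qed

lemma odd_col_degree_step:
  fixes J :: "'n::finite idx set"
  assumes ne: "J \<noteq> {}" and IH: "\<And>L :: 'n idx set. card L < card J \<Longrightarrow> col_degree_bounded L"
    and K: "odd_col a J K \<noteq> 0"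
  shows "card K \<le> card J \<or> K = insert a J"
proof -
  define i where "i = idx_min J"
  define J' where "J' = J - {i}"
  have cJ: "card J = Suc (card J')" using card_idx_min[OF ne] by (simp add: J'_def i_def)
  have even_J': "card K \<le> card J" if "even_col b c J' K \<noteq> 0" for b c
    using that IH[of J'] cJ unfolding col_degree_bounded_def by (metis le_SucI lessI)
  note unfold = odd_col_unfold[OF ne, of a, folded i_def, folded J'_def]
  consider "idx_below a J" | "a = i" | "\<not> idx_below a J" "a \<noteq> i" by blast
  then show ?thesis
  proof cases
    case 1 then show ?thesis using K unfold by (simp add: basis_vec_apply split: if_splits)
  next
    case 2 then show ?thesis
      using K unfold idx_min_not_below[OF ne] even_J' by (auto simp: i_def scaleR_fun_def)
  next
    case 3
    then show ?thesis
      using K unfold even_J' odd_col_degree_step_above[OF ne IH, of a K, folded i_def, folded J'_def]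
      by fastforce
  qed
qed

lemma even_col_degree_step:
  fixes J :: "'n::finite idx set"
  assumes ne: "J \<noteq> {}" and IH: "\<And>L :: 'n idx set. card L < card J \<Longrightarrow> col_degree_bounded L"
    and K: "even_col b c J K \<noteq> 0"
  shows "card K \<le> card J"
proof -
  define i where "i = idx_min J"
  define J' where "J' = J - {i}"
  have cJ: "card J = Suc (card J')" using card_idx_min[OF ne] by (simp add: J'_def i_def)
  have IH': "col_degree_bounded J'" using IH[of J'] cJ by simp
  have odd_J': "card K \<le> card J" if "odd_col x J' K \<noteq> 0" for x
    using that IH' cJ card_insert_le_Suc[of x J'] unfolding col_degree_bounded_def
    by (metis le_SucI order_trans)
  consider L where "even_col b c J' L \<noteq> 0" "(if card L \<le> card J' then odd_col i L else 0) K \<noteq> 0"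
    | "odd_col c J' K \<noteq> 0" | "odd_col b J' K \<noteq> 0"
    using K even_col_unfold[OF ne, of b c, folded i_def, folded J'_def] mat_app_supp
    by (fastforce simp: scaleR_fun_def)
  then show ?thesis
  proof cases
    case (1 L)
    then have "card L \<le> card J'" and "odd_col i L K \<noteq> 0" by (simp_all split: if_splits)
    then have "card K \<le> card L \<or> K = insert i L"
      using IH[of L] cJ unfolding col_degree_bounded_def by auto
    then show ?thesis using \<open>card L \<le> card J'\<close> cJ card_insert_le_Suc[of i L] by auto
  qed (use odd_J' in auto)
qed

lemma col_degree_bounded: "col_degree_bounded J"
proof (induction "card J" arbitrary: J rule: less_induct)
  case less
  show ?case
  proof (cases "J = {}")
    case True
    then show ?thesis
      by (simp add: col_degree_bounded_def odd_col_empty even_col_empty basis_vec_apply single_vec_def)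
  next
    case False
    then show ?thesis
      using odd_col_degree_step[OF False less] even_col_degree_step[OF False less]
      unfolding col_degree_bounded_def by blast
  qed
qed

lemma odd_col_degree: "odd_col a J K \<noteq> 0 \<Longrightarrow> card K \<le> card J \<or> K = insert a J"
  using col_degree_bounded unfolding col_degree_bounded_def by blast
lemma even_col_degree: "even_col b c J K \<noteq> 0 \<Longrightarrow> card K \<le> card J"
  using col_degree_bounded unfolding col_degree_bounded_def by blast

definition odd_op :: "'n::finite idx \<Rightarrow> 'n M \<Rightarrow> 'n M" where
  "odd_op a m = mat_app (odd_col a) m"
definition even_op :: "'n::finite idx \<Rightarrow> 'n idx \<Rightarrow> 'n M \<Rightarrow> 'n M" where
  "even_op b c m = mat_app (even_col b c) m"

lemma odd_op_basis_vec [simp]: "odd_op a (basis_vec J) = odd_col a J"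
  by (simp add: odd_op_def)
lemma even_op_basis_vec [simp]: "even_op b c (basis_vec J) = even_col b c J"
  by (simp add: even_op_def)

lemma odd_op_add [simp]: "odd_op a (x + y) = odd_op a x + odd_op a y"
  and odd_op_diff [simp]: "odd_op a (x - y) = odd_op a x - odd_op a y"
  and odd_op_minus [simp]: "odd_op a (- x) = - odd_op a x"
  and odd_op_scaleR [simp]: "odd_op a (scaleR r x) = scaleR r (odd_op a x)"
  by (simp_all add: odd_op_def)
lemma even_op_add [simp]: "even_op b c (x + y) = even_op b c x + even_op b c y"
  and even_op_diff [simp]: "even_op b c (x - y) = even_op b c x - even_op b c y"
  and even_op_minus [simp]: "even_op b c (- x) = - even_op b c x"
  and even_op_scaleR [simp]: "even_op b c (scaleR r x) = scaleR r (even_op b c x)"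
  by (simp_all add: even_op_def)

lemma matrix_op_odd_op [simp]: "matrix_op (odd_op a)"
  unfolding odd_op_def by (rule matrix_op_mat_app)
lemma matrix_op_even_op [simp]: "matrix_op (even_op b c)"
  unfolding even_op_def by (rule matrix_op_mat_app)

lemma odd_col_below: "idx_below a J \<Longrightarrow> odd_col a J = basis_vec (insert a J)"
  by (cases "J = {}") (simp_all add: odd_col_empty odd_col_unfold)

lemma odd_op_min_basis_vec:
  "J \<noteq> {} \<Longrightarrow> odd_op (idx_min J) (basis_vec (J - {idx_min J})) = basis_vec J"
  by (simp add: odd_col_below[OF idx_below_min] insert_absorb idx_min_in)

lemma odd_col_min:
  assumes "J \<noteq> {}"
  shows "odd_col (idx_min J) J = scaleR (1/2) (even_op (idx_min J) (idx_min J) (basis_vec (J - {idx_min J})))"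
  using idx_min_not_below[OF assms] odd_col_unfold[OF assms, of "idx_min J"] by simp

lemma odd_col_above:
  assumes ne: "J \<noteq> {}" and lt: "idx_less (idx_min J) a"
  defines "i \<equiv> idx_min J" and "J' \<equiv> J - {idx_min J}"
  shows "odd_col a J = - odd_op i (odd_op a (basis_vec J')) + even_op a i (basis_vec J')"
  unfolding i_def J'_def
proof -
  have not_below: "\<not> idx_below a J"
    using lt idx_min_in[OF ne] unfolding idx_below_def idx_less_def by force
  have "a \<noteq> idx_min J" using lt by (auto simp: idx_less_def)
  have "mat_app (\<lambda>L. if card L \<le> card (J - {idx_min J}) then odd_col (idx_min J) L
                      else basis_vec (insert (idx_min J) L)) (odd_col a (J - {idx_min J}))
      = mat_app (odd_col (idx_min J)) (odd_col a (J - {idx_min J}))"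
  proof (rule mat_app_cong)
    fix L assume L: "odd_col a (J - {idx_min J}) L \<noteq> 0"
    show "(if card L \<le> card (J - {idx_min J}) then odd_col (idx_min J) L
           else basis_vec (insert (idx_min J) L)) = odd_col (idx_min J) L"
    proof (cases "card L \<le> card (J - {idx_min J})")
      case False
      then have "L = insert a (J - {idx_min J})" using odd_col_degree[OF L] by auto
      then have "idx_below (idx_min J) L" using idx_below_insert[OF idx_below_min lt] by simp
      then show ?thesis using False by (simp add: odd_col_below)
    qed simp
  qed
  then show "odd_col a J = - odd_op (idx_min J) (odd_op a (basis_vec (J - {idx_min J})))
      + even_op a (idx_min J) (basis_vec (J - {idx_min J}))"
    using not_below \<open>a \<noteq> idx_min J\<close> odd_col_unfold[OF ne, of a] by (simp add: odd_op_def)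
qed

lemma even_col_step:
  assumes "J \<noteq> {}"
  defines "i \<equiv> idx_min J" and "J' \<equiv> J - {idx_min J}"
  shows "even_col b c J = odd_op i (even_op b c (basis_vec J'))
     + scaleR (g_real i b) (odd_op c (basis_vec J')) + scaleR (g_real i c) (odd_op b (basis_vec J'))"
proof -
  have "mat_app (\<lambda>L. if card L \<le> card J' then odd_col i L else 0) (even_col b c J')
      = mat_app (odd_col i) (even_col b c J')"
    by (rule mat_app_cong) (auto dest: even_col_degree)
  then show ?thesis
    using even_col_unfold[OF assms(1), of b c] unfolding i_def J'_def by (simp add: odd_op_def)
qed

lemma even_col_sym: "even_col b c J = even_col c b J"
proof (induction "card J" arbitrary: J rule: less_induct)
  case less
  show ?case
  proof (cases "J = {}")
    case True then show ?thesis by (simp add: even_col_empty sig2_sym)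
  next
    case False
    have "card (J - {idx_min J}) < card J" using card_idx_min[OF False] by simp
    then have "even_col b c (J - {idx_min J}) = even_col c b (J - {idx_min J})" using less by blast
    then show ?thesis using even_col_step[OF False, of b c] even_col_step[OF False, of c b]
      by (simp add: even_op_def)
  qed
qed

lemma even_op_sym: "even_op b c m = even_op c b m"
  unfolding even_op_def by (metis even_col_sym ext)

section \<open>The defining relations hold on M\<close>

lemma half_half: "scaleR (1/2) x + scaleR (1/2) x = (x::'a::real_vector)"
  by (simp add: scaleR_add_left[symmetric])
lemma eq_half_of_double: "x + x = y \<Longrightarrow> x = scaleR (1/2) (y::'a::real_vector)"
  by (metis half_half scaleR_add_right add_left_cancel add_right_cancel)

lemma double_scaleR: "scaleR c v + scaleR c v = scaleR (2 * c) (v::'a::real_vector)"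
  by (simp add: scaleR_add_left[symmetric])

lemma eq_add_double_of_diff:
  fixes X Z A B :: "'a::real_vector"
  assumes "X - Z = scaleR (- g) A + scaleR (- h) B + scaleR (- g) A + scaleR (- h) B"
  shows "Z = X + scaleR (2 * g) A + scaleR (2 * h) B"
proof -
  have "Z = X - (scaleR (- g) A + scaleR (- h) B + scaleR (- g) A + scaleR (- h) B)"
    using assms by (simp add: algebra_simps)
  also have "\<dots> = X + scaleR (2 * g) A + scaleR (2 * h) B"
    by (simp add: algebra_simps scaleR_add_left[symmetric])
  finally show ?thesis .
qed

definition odd_odd_rel :: "'n::finite idx \<Rightarrow> 'n idx \<Rightarrow> 'n M \<Rightarrow> bool" where
  "odd_odd_rel a b m \<longleftrightarrow> odd_op a (odd_op b m) + odd_op b (odd_op a m) = even_op a b m"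
definition odd_even_rel :: "'n::finite idx \<Rightarrow> 'n idx \<Rightarrow> 'n idx \<Rightarrow> 'n M \<Rightarrow> bool" where
  "odd_even_rel z b c m \<longleftrightarrow> odd_op z (even_op b c m) - even_op b c (odd_op z m) =
     scaleR (- g_real z b) (odd_op c m) + scaleR (- g_real z c) (odd_op b m)"
definition even_even_rel :: "'n::finite idx \<Rightarrow> 'n idx \<Rightarrow> 'n idx \<Rightarrow> 'n idx \<Rightarrow> 'n M \<Rightarrow> bool" where
  "even_even_rel a b c d m \<longleftrightarrow> even_op a b (even_op c d m) - even_op c d (even_op a b m) =
     scaleR (- g_real a c) (even_op b d m) + scaleR (- g_real a d) (even_op b c m) +
     scaleR (- g_real b c) (even_op a d m) + scaleR (- g_real b d) (even_op a c m)"

lemma odd_odd_rel_of_basis: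
  assumes "\<And>L. m L \<noteq> 0 \<Longrightarrow> odd_odd_rel a b (basis_vec L)" shows "odd_odd_rel a b m"
  unfolding odd_odd_rel_def
  by (rule matrix_op_eq_on_supp[OF matrix_op_add[OF matrix_op_comp matrix_op_comp]])
     (use assms in \<open>simp_all add: odd_odd_rel_def\<close>)
lemma odd_even_rel_of_basis:
  assumes "\<And>L. m L \<noteq> 0 \<Longrightarrow> odd_even_rel z b c (basis_vec L)" shows "odd_even_rel z b c m"
  unfolding odd_even_rel_def
  by (rule matrix_op_eq_on_supp[OF matrix_op_diff[OF matrix_op_comp matrix_op_comp]
        matrix_op_add[OF matrix_op_scaleR matrix_op_scaleR]])
     (use assms in \<open>simp_all add: odd_even_rel_def\<close>)
lemma even_even_rel_of_basis:
  assumes "\<And>L. m L \<noteq> 0 \<Longrightarrow> even_even_rel a b c d (basis_vec L)" shows "even_even_rel a b c d m"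
  unfolding even_even_rel_def
  by (rule matrix_op_eq_on_supp[OF matrix_op_diff[OF matrix_op_comp matrix_op_comp]
        matrix_op_add[OF matrix_op_add[OF matrix_op_add[OF matrix_op_scaleR matrix_op_scaleR]
          matrix_op_scaleR] matrix_op_scaleR]])
     (use assms in \<open>simp_all add: even_even_rel_def\<close>)

lemma odd_odd_rel_sym: "odd_odd_rel a b m \<longleftrightarrow> odd_odd_rel b a m"
  unfolding odd_odd_rel_def by (simp add: even_op_sym add.commute)

lemma odd_odd_rel_below:
  assumes b: "idx_below b L" shows "odd_odd_rel a b (basis_vec L)"
proof -
  define K where "K = insert b L"
  have bK: "odd_op b (basis_vec L) = basis_vec K" using odd_col_below[OF b] by (simp add: K_def)
  have neK: "K \<noteq> {}" by (simp add: K_def)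
  have mK: "idx_min K = b" using idx_min_insert_below[OF b] by (simp add: K_def)
  have KL: "K - {b} = L" using idx_below_notin[OF b] by (auto simp: K_def)
  consider (below) "idx_below a K" | (eq) "a = b" | (above) "\<not> idx_below a K" "a \<noteq> b" by blast
  then show ?thesis
  proof cases
    case below
    have ab: "idx_less a b" and aL: "idx_below a L" using below unfolding idx_below_def K_def by simp_all
    define K' where "K' = insert a L"
    have "odd_op b (odd_op a (basis_vec L)) = odd_col b K'"
      using odd_col_below[OF aL] by (simp add: K'_def)
    also have "\<dots> = - odd_op a (odd_op b (basis_vec L)) + even_op b a (basis_vec L)"
      using odd_col_above[of K' b] idx_min_insert_below[OF aL] idx_below_notin[OF aL] ab
      by (simp add: K'_def insert_Diff_if)
    finally show ?thesis unfolding odd_odd_rel_def by (simp add: even_op_sym)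
  next
    case eq
    have "odd_op b (odd_op b (basis_vec L)) = scaleR (1/2) (even_op b b (basis_vec L))"
      using odd_col_min[OF neK] bK mK KL by simp
    then show ?thesis unfolding odd_odd_rel_def eq by (simp add: half_half)
  next
    case above
    have "idx_less b a" using idx_less_min_of_not_below[of a K] above mK by simp
    then have "odd_op a (odd_op b (basis_vec L)) = - odd_op b (odd_op a (basis_vec L)) + even_op a b (basis_vec L)"
      using odd_col_above[OF neK, of a] bK mK KL by simp
    then show ?thesis unfolding odd_odd_rel_def by simp
  qed
qed

lemma odd_even_rel_below:
  assumes z: "idx_below z L" shows "odd_even_rel z b c (basis_vec L)"
proof -
  define K where "K = insert z L"
  have zK: "odd_op z (basis_vec L) = basis_vec K" using odd_col_below[OF z] by (simp add: K_def)
  have "K \<noteq> {}" and "idx_min K = z" and "K - {z} = L"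
    using idx_min_insert_below[OF z] idx_below_notin[OF z] by (auto simp: K_def)
  then have "even_op b c (odd_op z (basis_vec L)) = odd_op z (even_op b c (basis_vec L))
      + scaleR (g_real z b) (odd_op c (basis_vec L)) + scaleR (g_real z c) (odd_op b (basis_vec L))"
    using even_col_step[of K b c] zK by simp
  then show ?thesis unfolding odd_even_rel_def by (simp add: algebra_simps)
qed

definition rels_hold :: "'n::finite idx set \<Rightarrow> bool" where
  "rels_hold L \<longleftrightarrow> (\<forall>a b. odd_odd_rel a b (basis_vec L)) \<and> (\<forall>z b c. odd_even_rel z b c (basis_vec L))
     \<and> (\<forall>a b c d. even_even_rel a b c d (basis_vec L))"

lemma odd_odd_rel_of_low_or_below:
  fixes m :: "'n::finite M"
  assumes IH: "\<And>L :: 'n idx set. card L < n \<Longrightarrow> rels_hold L"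
    and low: "\<And>L. m L \<noteq> 0 \<Longrightarrow> card L < n \<or> idx_below b L"
  shows "odd_odd_rel a b m"
proof (rule odd_odd_rel_of_basis)
  fix L assume "m L \<noteq> 0"
  then consider "card L < n" | "idx_below b L" using low by blast
  then show "odd_odd_rel a b (basis_vec L)"
    by cases (use IH odd_odd_rel_below in \<open>auto simp: rels_hold_def\<close>)
qed

lemma odd_even_rel_of_low_or_below:
  fixes m :: "'n::finite M"
  assumes IH: "\<And>L :: 'n idx set. card L < n \<Longrightarrow> rels_hold L"
    and low: "\<And>L. m L \<noteq> 0 \<Longrightarrow> card L < n \<or> idx_below z L"
  shows "odd_even_rel z b c m"
proof (rule odd_even_rel_of_basis)
  fix L assume "m L \<noteq> 0"
  then consider "card L < n" | "idx_below z L" using low by blast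
  then show "odd_even_rel z b c (basis_vec L)"
    by cases (use IH odd_even_rel_below in \<open>auto simp: rels_hold_def\<close>)
qed

lemma odd_odd_rel_of_low:
  fixes m :: "'n::finite M"
  assumes "\<And>L :: 'n idx set. card L < n \<Longrightarrow> rels_hold L" and "\<And>L. m L \<noteq> 0 \<Longrightarrow> card L < n"
  shows "odd_odd_rel a b m"
proof (rule odd_odd_rel_of_low_or_below[OF assms(1)])
  fix L assume "m L \<noteq> 0"
  then show "card L < n \<or> idx_below b L" using assms(2) by blast
qed
lemma odd_even_rel_of_low:
  fixes m :: "'n::finite M"
  assumes "\<And>L :: 'n idx set. card L < n \<Longrightarrow> rels_hold L" and "\<And>L. m L \<noteq> 0 \<Longrightarrow> card L < n"
  shows "odd_even_rel z b c m"
proof (rule odd_even_rel_of_low_or_below[OF assms(1)])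
  fix L assume "m L \<noteq> 0"
  then show "card L < n \<or> idx_below z L" using assms(2) by blast
qed
lemma even_even_rel_of_low:
  fixes m :: "'n::finite M"
  assumes "\<And>L :: 'n idx set. card L < n \<Longrightarrow> rels_hold L" and "\<And>L. m L \<noteq> 0 \<Longrightarrow> card L < n"
  shows "even_even_rel a b c d m"
proof (rule even_even_rel_of_basis)
  fix L assume "m L \<noteq> 0"
  then show "even_even_rel a b c d (basis_vec L)" using assms unfolding rels_hold_def by blast
qed

lemma single_vec_add: "single_vec J x + single_vec J y = single_vec J (x + y)"
  by (rule ext) (simp add: single_vec_def)
lemma single_vec_diff: "single_vec J x - single_vec J y = single_vec J (x - y)"
  by (rule ext) (simp add: single_vec_def)
lemma single_vec_scaleR: "scaleR r (single_vec J x) = single_vec J (scaleR r x)"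
  by (rule ext) (simp add: single_vec_def scaleR_fun_def)

lemma even_op_single_vec_empty: "even_op a b (single_vec {} u) = single_vec {} (sig2 a b * u)"
  by (simp only: even_op_def mat_app_single_vec even_col_empty) (simp add: rmult_def single_vec_def fun_eq_iff)

lemma even_even_rel_empty: "even_even_rel a b c d (basis_vec {})"
  unfolding even_even_rel_def basis_vec_def even_op_single_vec_empty
  by (simp add: single_vec_diff single_vec_scaleR single_vec_add sig2_sig2_comm)

(* The induction step at e_J = \<rho>_i Y, where i = min J and Y = e_(J - {i}): unfolding the
   operators at e_J by the column recursion leaves relations applied to vectors of smaller degree,
   or to vectors e_L with i below L, where \<rho>_i acts by the first case of the recursion. *)
context
  fixes J :: "'n::finite idx set" and i :: "'n idx" and Y :: "'n M"
  assumes ne: "J \<noteq> {}" and i_def: "i = idx_min J" and Y_def: "Y = basis_vec (J - {i})"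
    and IH: "\<And>L :: 'n idx set. card L < card J \<Longrightarrow> rels_hold L"
begin

private lemma low_Y: "Y L \<noteq> 0 \<Longrightarrow> card L < card J"
  using card_idx_min[OF ne] by (simp add: Y_def i_def basis_vec_apply split: if_splits)

private lemma low_even_op_Y: "even_op p q Y L \<noteq> 0 \<Longrightarrow> card L < card J"
  using card_idx_min[OF ne] even_col_degree[of p q "J - {i}" L] by (simp add: Y_def i_def)

private lemma low_or_below_odd_op_Y:
  assumes "idx_less i x" and "odd_op x Y L \<noteq> 0" shows "card L < card J \<or> idx_below i L"
  using odd_col_degree[of x "J - {i}" L] assms card_idx_min[OF ne] idx_below_insert[OF idx_below_min]
  by (auto simp: Y_def i_def)

private lemma basis_vec_eq: "basis_vec J = odd_op i Y"
  using odd_op_min_basis_vec[OF ne] by (simp add: i_def Y_def)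

private lemma odd_op_min: "odd_op i (basis_vec J) = scaleR (1/2) (even_op i i Y)"
  using odd_col_min[OF ne] by (simp add: i_def Y_def)

private lemma odd_op_above: "idx_less i x \<Longrightarrow> odd_op x (basis_vec J) = - odd_op i (odd_op x Y) + even_op x i Y"
  using odd_col_above[OF ne] by (simp add: i_def Y_def)

private lemma even_op_step:
  "even_op p q (basis_vec J) = odd_op i (even_op p q Y) + scaleR (g_real i p) (odd_op q Y) + scaleR (g_real i q) (odd_op p Y)"
  using even_col_step[OF ne] by (simp add: i_def Y_def)

private lemma odd_odd_rel_Y: "odd_odd_rel a b Y"
  using IH low_Y by (rule odd_odd_rel_of_low)
private lemma odd_even_rel_Y: "odd_even_rel z b c Y"
  using IH low_Y by (rule odd_even_rel_of_low)
private lemma even_even_rel_Y: "even_even_rel a b c d Y"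
  using IH low_Y by (rule even_even_rel_of_low)
private lemma odd_odd_rel_even_op_Y: "odd_odd_rel a b (even_op p q Y)"
  using IH low_even_op_Y by (rule odd_odd_rel_of_low)
private lemma odd_even_rel_even_op_Y: "odd_even_rel z b c (even_op p q Y)"
  using IH low_even_op_Y by (rule odd_even_rel_of_low)
private lemma odd_odd_rel_odd_op_Y: assumes "idx_less i x" shows "odd_odd_rel a i (odd_op x Y)"
  using IH low_or_below_odd_op_Y[OF assms] by (rule odd_odd_rel_of_low_or_below)
private lemma odd_even_rel_odd_op_Y: assumes "idx_less i x" shows "odd_even_rel i b c (odd_op x Y)"
  using IH low_or_below_odd_op_Y[OF assms] by (rule odd_even_rel_of_low_or_below)

private lemma anticomm_Y: "even_op p q Y = odd_op p (odd_op q Y) + odd_op q (odd_op p Y)"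
  using odd_odd_rel_Y[of p q] unfolding odd_odd_rel_def by simp

private lemma odd_odd_rel_min_min: "odd_odd_rel i i (basis_vec J)"
proof -
  have "odd_op i (even_op i i Y) = even_op i i (odd_op i Y)"
    using odd_even_rel_Y[of i i i] unfolding odd_even_rel_def by simp
  then show ?thesis unfolding odd_odd_rel_def odd_op_min by (simp add: basis_vec_eq half_half)
qed

private lemma odd_odd_rel_above_min:
  assumes lx: "idx_less i x" shows "odd_odd_rel x i (basis_vec J)"
proof -
  have d: "odd_op x (even_op i i Y) = even_op i i (odd_op x Y) - scaleR (2 * g_real x i) (odd_op i Y)"
    using odd_even_rel_Y[of x i i] unfolding odd_even_rel_def
    by (simp add: double_scaleR algebra_simps)
  have s: "odd_op i (odd_op i (odd_op x Y)) = scaleR (1/2) (even_op i i (odd_op x Y))"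
    using odd_odd_rel_odd_op_Y[OF lx, of i]
    unfolding odd_odd_rel_def by (rule eq_half_of_double)
  show ?thesis unfolding odd_odd_rel_def odd_op_min odd_op_above[OF lx] even_op_step
    by (simp add: d s g_real_antisym[of x i] algebra_simps basis_vec_eq)
qed

private lemma odd_odd_rel_above_above:
  assumes la: "idx_less i a" and lb: "idx_less i b" shows "odd_odd_rel a b (basis_vec J)"
proof -
  have s1: "odd_op a (odd_op i (odd_op b Y)) = even_op a i (odd_op b Y) - odd_op i (odd_op a (odd_op b Y))"
    using odd_odd_rel_odd_op_Y[OF lb, of a]
    unfolding odd_odd_rel_def by (simp add: algebra_simps)
  have s2: "odd_op b (odd_op i (odd_op a Y)) = even_op b i (odd_op a Y) - odd_op i (odd_op b (odd_op a Y))"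
    using odd_odd_rel_odd_op_Y[OF la, of b]
    unfolding odd_odd_rel_def by (simp add: algebra_simps)
  have d1: "odd_op a (even_op b i Y) = even_op b i (odd_op a Y) - scaleR (g_real a b) (odd_op i Y) - scaleR (g_real a i) (odd_op b Y)"
    using odd_even_rel_Y[of a b i] unfolding odd_even_rel_def
    by (simp add: algebra_simps)
  have d2: "odd_op b (even_op a i Y) = even_op a i (odd_op b Y) - scaleR (g_real b a) (odd_op i Y) - scaleR (g_real b i) (odd_op a Y)"
    using odd_even_rel_Y[of b a i] unfolding odd_even_rel_def
    by (simp add: algebra_simps)
  have s3: "odd_op i (odd_op a (odd_op b Y)) = odd_op i (even_op a b Y) - odd_op i (odd_op b (odd_op a Y))"
    using anticomm_Y[of a b] by (simp add: algebra_simps)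
  show ?thesis unfolding odd_odd_rel_def odd_op_above[OF la] odd_op_above[OF lb] even_op_step
    by (simp add: s1 s2 d1 d2 s3 g_real_antisym[of a b] g_real_antisym[of i a] g_real_antisym[of i b] algebra_simps)
qed

private lemma odd_even_rel_min: "odd_even_rel i b c (basis_vec J)"
proof -
  have s: "odd_op i (odd_op i (even_op b c Y)) = scaleR (1/2) (even_op i i (even_op b c Y))"
    using odd_odd_rel_even_op_Y[of i i b c]
    unfolding odd_odd_rel_def by (rule eq_half_of_double)
  have e: "even_op b c (even_op i i Y) = even_op i i (even_op b c Y)
      + scaleR (2 * g_real i b) (even_op i c Y) + scaleR (2 * g_real i c) (even_op i b Y)"
    using even_even_rel_Y[of i i b c]
    unfolding even_even_rel_def by (intro eq_add_double_of_diff) simp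
  show ?thesis unfolding odd_even_rel_def odd_op_min even_op_step unfolding basis_vec_eq
    by (simp add: s e anticomm_Y[of i c] anticomm_Y[of i b] algebra_simps)
qed

private lemma odd_even_rel_above:
  assumes lz: "idx_less i z" shows "odd_even_rel z b c (basis_vec J)"
proof -
  have f1: "odd_op z (odd_op i (even_op b c Y)) = even_op z i (even_op b c Y) - odd_op i (odd_op z (even_op b c Y))"
    using odd_odd_rel_even_op_Y[of z i b c]
    unfolding odd_odd_rel_def by (simp add: algebra_simps)
  have f2: "odd_op z (even_op b c Y) = even_op b c (odd_op z Y) - scaleR (g_real z b) (odd_op c Y) - scaleR (g_real z c) (odd_op b Y)"
    using odd_even_rel_Y[of z b c]
    unfolding odd_even_rel_def by (simp add: algebra_simps)
  have f3: "odd_op i (even_op b c (odd_op z Y)) = even_op b c (odd_op i (odd_op z Y))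
      - scaleR (g_real i b) (odd_op c (odd_op z Y)) - scaleR (g_real i c) (odd_op b (odd_op z Y))"
    using odd_even_rel_odd_op_Y[OF lz, of b c]
    unfolding odd_even_rel_def by (simp add: algebra_simps)
  have f4: "even_op z i (even_op b c Y) = even_op b c (even_op z i Y)
      - scaleR (g_real z b) (even_op i c Y) - scaleR (g_real z c) (even_op i b Y)
      - scaleR (g_real i b) (even_op z c Y) - scaleR (g_real i c) (even_op z b Y)"
    using even_even_rel_Y[of z i b c]
    unfolding even_even_rel_def by (simp add: algebra_simps)
  show ?thesis unfolding odd_even_rel_def odd_op_above[OF lz] even_op_step unfolding basis_vec_eq
    by (simp add: f1 f2 f3 f4 anticomm_Y[of z c] anticomm_Y[of z b] anticomm_Y[of i c] anticomm_Y[of i b]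
        algebra_simps)
qed

private lemma even_even_rel_nonempty: "even_even_rel a b c d (basis_vec J)"
proof -
  have X1: "even_op a b (odd_op i (even_op c d Y)) = odd_op i (even_op a b (even_op c d Y))
      + scaleR (g_real i a) (odd_op b (even_op c d Y)) + scaleR (g_real i b) (odd_op a (even_op c d Y))"
    using odd_even_rel_even_op_Y[of i a b c d] unfolding odd_even_rel_def
    by (simp add: algebra_simps)
  have X2: "even_op c d (odd_op i (even_op a b Y)) = odd_op i (even_op c d (even_op a b Y))
      + scaleR (g_real i c) (odd_op d (even_op a b Y)) + scaleR (g_real i d) (odd_op c (even_op a b Y))"
    using odd_even_rel_even_op_Y[of i c d a b] unfolding odd_even_rel_def
    by (simp add: algebra_simps)
  have X3: "even_op a b (odd_op x Y) = odd_op x (even_op a b Y) - scaleR (g_real a x) (odd_op b Y) - scaleR (g_real b x) (odd_op a Y)"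
    for x
    using odd_even_rel_Y[of x a b] g_real_antisym[of a x] g_real_antisym[of b x]
    unfolding odd_even_rel_def by (simp add: algebra_simps)
  have X4: "even_op c d (odd_op x Y) = odd_op x (even_op c d Y) + scaleR (g_real x c) (odd_op d Y) + scaleR (g_real x d) (odd_op c Y)"
    for x
    using odd_even_rel_Y[of x c d] unfolding odd_even_rel_def
    by (simp add: algebra_simps)
  have X5: "odd_op i (even_op a b (even_op c d Y)) = odd_op i (even_op c d (even_op a b Y)) +
      scaleR (- g_real a c) (odd_op i (even_op b d Y)) + scaleR (- g_real a d) (odd_op i (even_op b c Y)) +
      scaleR (- g_real b c) (odd_op i (even_op a d Y)) + scaleR (- g_real b d) (odd_op i (even_op a c Y))"
  proof -
    have "even_op a b (even_op c d Y) = even_op c d (even_op a b Y) +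
        (scaleR (- g_real a c) (even_op b d Y) + scaleR (- g_real a d) (even_op b c Y) +
         scaleR (- g_real b c) (even_op a d Y) + scaleR (- g_real b d) (even_op a c Y))"
      using even_even_rel_Y[of a b c d]
      unfolding even_even_rel_def by (simp add: algebra_simps)
    then have "odd_op i (even_op a b (even_op c d Y)) = odd_op i (even_op c d (even_op a b Y) +
        (scaleR (- g_real a c) (even_op b d Y) + scaleR (- g_real a d) (even_op b c Y) +
         scaleR (- g_real b c) (even_op a d Y) + scaleR (- g_real b d) (even_op a c Y)))"
      by (rule arg_cong)
    then show ?thesis by (simp add: algebra_simps)
  qed
  show ?thesis unfolding even_even_rel_def even_op_step
    by (simp add: X1 X2 X3[of c] X3[of d] X4[of a] X4[of b] X5 algebra_simps
        g_real_antisym[of i a] g_real_antisym[of i b] g_real_antisym[of i c] g_real_antisym[of i d])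
qed

lemma rels_hold_nonempty: "rels_hold J"
proof -
  have idx_cases: "idx_below x J \<or> x = i \<or> idx_less i x" for x
    using idx_less_min_of_not_below[of x J] by (auto simp: i_def)
  have "odd_odd_rel a b (basis_vec J)" for a b
  proof -
    consider "idx_below b J" | "idx_below a J" | "a = i" "b = i" | "a = i" "idx_less i b"
      | "idx_less i a" "b = i" | "idx_less i a" "idx_less i b"
      using idx_cases[of a] idx_cases[of b] by blast
    then show ?thesis
    proof cases
      case 2 then show ?thesis using odd_odd_rel_below odd_odd_rel_sym by blast
    next
      case 4 then show ?thesis using odd_odd_rel_above_min odd_odd_rel_sym by blast
    qed (simp_all add: odd_odd_rel_below odd_odd_rel_min_min odd_odd_rel_above_min odd_odd_rel_above_above)
  qed
  moreover have "odd_even_rel z b c (basis_vec J)" for z b c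
    using idx_cases[of z] by (auto intro: odd_even_rel_below odd_even_rel_min odd_even_rel_above)
  ultimately show ?thesis unfolding rels_hold_def using even_even_rel_nonempty by blast
qed

end

lemma rels_hold_all: "rels_hold J"
proof (induction "card J" arbitrary: J rule: less_induct)
  case less
  show ?case
  proof (cases "J = {}")
    case True
    then show ?thesis
      by (simp add: rels_hold_def odd_odd_rel_below odd_even_rel_below idx_below_def even_even_rel_empty)
  next
    case False
    show ?thesis by (rule rels_hold_nonempty[OF False HOL.refl HOL.refl less])
  qed
qed

lemma odd_odd_rel: "odd_odd_rel a b (m :: 'n::finite M)"
  by (rule odd_odd_rel_of_basis) (use rels_hold_all[unfolded rels_hold_def] in blast)
lemma odd_even_rel: "odd_even_rel z b c (m :: 'n::finite M)"
  by (rule odd_even_rel_of_basis) (use rels_hold_all[unfolded rels_hold_def] in blast)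
lemma even_even_rel: "even_even_rel a b c d (m :: 'n::finite M)"
  by (rule even_even_rel_of_basis) (use rels_hold_all[unfolded rels_hold_def] in blast)

section \<open>The representation of U on M\<close>

lemma matrix_op_add_arg: "matrix_op T \<Longrightarrow> T (m1 + m2) = T m1 + T m2"
  by (metis matrix_op_apply mat_app_add)
lemma matrix_op_scaleM_arg: "matrix_op T \<Longrightarrow> T (scaleM c m) = scaleM c (T m)"
  by (metis matrix_op_apply mat_app_scaleM)
lemma matrix_op_rmult_arg: "matrix_op T \<Longrightarrow> T (rmult m u) = rmult (T m) u"
  by (metis matrix_op_apply mat_app_rmult)

primrec rep_expr :: "'n::finite fexpr \<Rightarrow> 'n M \<Rightarrow> 'n M" where
  "rep_expr (G g) = (case g of OddG a \<Rightarrow> odd_op a | EvenG a b \<Rightarrow> even_op a b)"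
| "rep_expr Zero_e = (\<lambda>m. 0)"
| "rep_expr Onee = (\<lambda>m. m)"
| "rep_expr (Ad x y) = (\<lambda>m. rep_expr x m + rep_expr y m)"
| "rep_expr (Mu x y) = (\<lambda>m. rep_expr x (rep_expr y m))"
| "rep_expr (Sc c x) = (\<lambda>m. scaleM c (rep_expr x m))"

lemma matrix_op_rep_expr: "matrix_op (rep_expr x)"
proof (induction x)
  case (G g) then show ?case by (cases g) simp_all
next
  case Zero_e then show ?case unfolding rep_expr.simps by (rule matrix_op_zero)
next
  case Onee then show ?case unfolding rep_expr.simps by (rule matrix_op_id)
next
  case (Ad x y) then show ?case unfolding rep_expr.simps by (rule matrix_op_add)
next
  case (Mu x y) then show ?case unfolding rep_expr.simps by (rule matrix_op_comp)
next
  case (Sc c x) then show ?case unfolding rep_expr.simps by (rule matrix_op_scaleM)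
qed

lemma scaleM_minus_gform: "scaleM (- gform a b) m = scaleR (- g_real a b) m"
  by (simp only: scaleM_def scaleR_fun_def scaleU_minus_gform)
lemma scaleM_minus_one: "scaleM (-1) m = - m"
  by (simp add: scaleM_def fun_eq_iff)

lemma rep_expr_respects: "ocong x y \<Longrightarrow> rep_expr x = rep_expr y"
proof (induction rule: ocong.induct)
  case (add_inv x)
  show ?case by (rule ext) (simp add: scaleM_minus_one)
next
  case (sc_add c x y)
  show ?case by (rule ext) (simp add: scaleM_def scaleU_add_right fun_eq_iff)
next
  case (sc_plus c d x)
  show ?case by (rule ext) (simp add: scaleM_def scaleU_add_left fun_eq_iff)
next
  case (sc_sc c d x)
  show ?case by (rule ext) (simp add: scaleM_def fun_eq_iff)
next
  case (sc_one x)
  show ?case by (rule ext) (simp add: scaleM_def fun_eq_iff)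
next
  case (distr_l x y z)
  show ?case by (rule ext) (simp add: matrix_op_add_arg[OF matrix_op_rep_expr])
next
  case (sc_mul_r c x y)
  show ?case by (rule ext) (simp add: matrix_op_scaleM_arg[OF matrix_op_rep_expr])
next
  case (rel_sym a b)
  show ?case by (rule ext) (simp add: even_op_sym[of a b])
next
  case (rel_odd_odd a b)
  show ?case by (rule ext) (simp add: odd_odd_rel[of a b, unfolded odd_odd_rel_def])
next
  case (rel_odd_even a b c)
  show ?case using odd_even_rel[of a b c] unfolding odd_even_rel_def
    by (simp add: fun_eq_iff Sb_def scaleM_minus_gform scaleM_minus_one)
next
  case (rel_even_even a b c d)
  show ?case using even_even_rel[of a b c d] unfolding even_even_rel_def
    by (simp add: fun_eq_iff Sb_def scaleM_minus_gform scaleM_minus_one)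
qed (simp_all add: add_ac)

lift_definition rep :: "'n::finite U \<Rightarrow> 'n M \<Rightarrow> 'n M" is rep_expr
  by (rule rep_expr_respects)

lemma rep_mult: "rep (x * y) m = rep x (rep y m)"
  by transfer simp
lemma rep_add: "rep (x + y) m = rep x m + rep y m"
  by transfer simp
lemma rep_one: "rep 1 m = m"
  by transfer simp
lemma rep_zero: "rep 0 m = 0"
  by transfer simp
lemma rep_scaleU: "rep (scaleU c x) m = scaleM c (rep x m)"
  by transfer simp
lemma rep_sig: "rep (sig a) = odd_op a"
  by transfer simp
lemma rep_sig2: "rep (sig2 a b) = even_op a b"
  by transfer simp
lemma matrix_op_rep: "matrix_op (rep x)"
  by transfer (rule matrix_op_rep_expr)

definition on_vacuum :: "'n::finite U \<Rightarrow> 'n M" where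
  "on_vacuum x = rep x (basis_vec {})"

lemma on_vacuum_add: "on_vacuum (x + y) = on_vacuum x + on_vacuum y"
  by (simp add: on_vacuum_def rep_add)
lemma on_vacuum_scaleU: "on_vacuum (scaleU c x) = scaleM c (on_vacuum x)"
  by (simp add: on_vacuum_def rep_scaleU)
lemma on_vacuum_zero: "on_vacuum 0 = 0"
  by (simp add: on_vacuum_def rep_zero)
lemma on_vacuum_sum: "on_vacuum (sum f A) = (\<Sum>a\<in>A. on_vacuum (f a))"
  by (induction A rule: infinite_finite_induct) (simp_all add: on_vacuum_zero on_vacuum_add)

lemma rmult_basis_vec: "rmult (basis_vec J) u = single_vec J u"
  by (simp add: rmult_def basis_vec_def single_vec_def fun_eq_iff)
lemma rmult_single_vec: "rmult (single_vec J x) u = single_vec J (x * u)"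
  by (simp add: rmult_def single_vec_def fun_eq_iff)

lemma on_vacuum_Usp: "u \<in> Usp \<Longrightarrow> on_vacuum u = single_vec {} u"
proof (induction rule: Usp.induct)
  case one then show ?case by (simp add: on_vacuum_def rep_one basis_vec_def)
next
  case (gen a b) then show ?case by (simp add: on_vacuum_def rep_sig2 even_col_empty)
next
  case (add x y) then show ?case by (simp add: on_vacuum_add single_vec_add)
next
  case (mul x y)
  have "on_vacuum (x * y) = rep x (rmult (basis_vec {}) y)"
    using mul by (simp add: on_vacuum_def rep_mult rmult_basis_vec)
  also have "\<dots> = rmult (on_vacuum x) y"
    by (simp add: matrix_op_rmult_arg[OF matrix_op_rep] on_vacuum_def)
  finally show ?case using mul by (simp add: rmult_single_vec)
next
  case (scl x c) then show ?case by (simp add: on_vacuum_scaleU scaleM_def single_vec_def fun_eq_iff)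
qed

lemma on_vacuum_mult_Usp:
  assumes "u \<in> Usp" shows "on_vacuum (x * u) = rmult (on_vacuum x) u"
proof -
  have "on_vacuum (x * u) = rep x (rmult (basis_vec {}) u)"
    using on_vacuum_Usp[OF assms] by (simp add: on_vacuum_def rep_mult rmult_basis_vec)
  then show ?thesis by (simp add: matrix_op_rmult_arg[OF matrix_op_rep] on_vacuum_def)
qed

section \<open>Ordered monomials and the degree filtration\<close>

definition sorted_idx :: "'n::finite idx set \<Rightarrow> 'n idx list" where
  "sorted_idx I = map from_nat (sorted_list_of_set (to_nat ` I))"

lemma sorted_idx_empty [simp]: "sorted_idx {} = []"
  by (simp add: sorted_idx_def)

lemma sorted_idx_nonempty:
  assumes "I \<noteq> {}" shows "sorted_idx I = idx_min I # sorted_idx (I - {idx_min I})"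
proof -
  have "to_nat ` I - {to_nat (idx_min I)} = to_nat ` (I - {idx_min I})"
    by (auto simp: inj_eq[OF inj_to_nat])
  then show ?thesis unfolding sorted_idx_def
    using sorted_list_of_set_nonempty[of "to_nat ` I"] idx_min_in_and_to_nat[OF assms] assms
    by (simp add: idx_min_def)
qed

lemma sorted_idx_props: "set (sorted_idx I) = I \<and> distinct (sorted_idx I) \<and> length (sorted_idx I) = card I"
proof (induction "card I" arbitrary: I rule: less_induct)
  case less
  show ?case
  proof (cases "I = {}")
    case False
    have "card (I - {idx_min I}) < card I" using card_idx_min[OF False] by simp
    then show ?thesis
      using less sorted_idx_nonempty[OF False] insert_idx_min[OF False] card_idx_min[OF False] by auto
  qed simp
qed

definition sig_prod :: "'n idx list \<Rightarrow> 'n U" where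
  "sig_prod w = prod_list (map sig w)"

lemma sig_prod_Nil [simp]: "sig_prod [] = 1"
  by (simp add: sig_prod_def)
lemma sig_prod_Cons: "sig_prod (a # w) = sig a * sig_prod w"
  by (simp add: sig_prod_def)
lemma sig_prod_append: "sig_prod (v @ w) = sig_prod v * sig_prod w"
  by (simp add: sig_prod_def)

lemma on_vacuum_sig_prod_sorted: "on_vacuum (sig_prod (sorted_idx I)) = basis_vec I"
proof (induction "card I" arbitrary: I rule: less_induct)
  case less
  show ?case
  proof (cases "I = {}")
    case True then show ?thesis by (simp add: on_vacuum_def rep_one)
  next
    case False
    have "card (I - {idx_min I}) < card I" using card_idx_min[OF False] by simp
    then show ?thesis
      using less odd_op_min_basis_vec[OF False] sorted_idx_nonempty[OF False]
      by (simp add: on_vacuum_def sig_prod_Cons rep_mult rep_sig)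
  qed
qed

lemma on_vacuum_sig_prod_degree: "on_vacuum (sig_prod v) K \<noteq> 0 \<Longrightarrow> card K \<le> length v"
proof (induction v arbitrary: K)
  case Nil then show ?case by (simp add: on_vacuum_def rep_one basis_vec_apply split: if_splits)
next
  case (Cons a v)
  then obtain L where L: "on_vacuum (sig_prod v) L \<noteq> 0" "odd_col a L K \<noteq> 0"
    using mat_app_supp by (fastforce simp: on_vacuum_def sig_prod_Cons rep_mult rep_sig odd_op_def)
  then show ?case
    using Cons.IH[OF L(1)] odd_col_degree[OF L(2)] card_insert_le_Suc[of a L] by auto
qed

definition deg_lt :: "nat \<Rightarrow> 'n::finite U set" where
  "deg_lt k = U_space.span {sig_prod v * u | v u. length v < k \<and> u \<in> Usp}"

lemma sig_prod_mult_in_deg_lt: "length v < k \<Longrightarrow> u \<in> Usp \<Longrightarrow> sig_prod v * u \<in> deg_lt k"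
  unfolding deg_lt_def by (rule U_space.span_base) blast

lemma deg_lt_add: "x \<in> deg_lt k \<Longrightarrow> y \<in> deg_lt k \<Longrightarrow> x + y \<in> deg_lt k"
  unfolding deg_lt_def by (rule U_space.span_add)
lemma deg_lt_diff: "x \<in> deg_lt k \<Longrightarrow> y \<in> deg_lt k \<Longrightarrow> x - y \<in> deg_lt k"
  unfolding deg_lt_def by (rule U_space.span_diff)
lemma deg_lt_scaleU: "x \<in> deg_lt k \<Longrightarrow> scaleU c x \<in> deg_lt k"
  unfolding deg_lt_def by (rule U_space.span_scale)
lemma deg_lt_scaleR: "x \<in> deg_lt k \<Longrightarrow> scaleR r x \<in> deg_lt k"
  unfolding scaleR_U_def by (rule deg_lt_scaleU)
lemma deg_lt_sum: "(\<And>i. i \<in> A \<Longrightarrow> f i \<in> deg_lt k) \<Longrightarrow> sum f A \<in> deg_lt k"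
  unfolding deg_lt_def by (rule U_space.span_sum)

lemma deg_lt_mult_Usp: "x \<in> deg_lt k \<Longrightarrow> u \<in> Usp \<Longrightarrow> x * u \<in> deg_lt k"
  unfolding deg_lt_def
proof (induction x rule: U_space.span_induct_alt)
  case base then show ?case by (simp add: U_space.span_zero)
next
  case (step c v y)
  then obtain w u' where v: "v = sig_prod w * u'" "length w < k" "u' \<in> Usp" by blast
  have "v * u \<in> deg_lt k" using v step.prems by (simp add: mult.assoc sig_prod_mult_in_deg_lt Usp.mul)
  then show ?case
    using step.IH step.prems unfolding deg_lt_def
    by (simp add: distrib_right scaleU_mult_left U_space.span_add U_space.span_scale)
qed

lemma on_vacuum_deg_lt: "x \<in> deg_lt k \<Longrightarrow> on_vacuum x K \<noteq> 0 \<Longrightarrow> card K < k"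
  unfolding deg_lt_def
proof (induction x rule: U_space.span_induct_alt)
  case base then show ?case by (simp add: on_vacuum_zero)
next
  case (step c v y)
  then obtain w u where v: "v = sig_prod w * u" "length w < k" "u \<in> Usp" by blast
  have "on_vacuum v K \<noteq> 0 \<or> on_vacuum y K \<noteq> 0"
    using step.prems by (auto simp: on_vacuum_add on_vacuum_scaleU scaleM_def)
  then show ?case
  proof
    assume "on_vacuum v K \<noteq> 0"
    then have "on_vacuum (sig_prod w) K \<noteq> 0" by (auto simp: v on_vacuum_mult_Usp rmult_def)
    then show ?thesis using on_vacuum_sig_prod_degree v(2) by fastforce
  qed (rule step.IH)
qed

section \<open>Spanning: U = \<Omega> U(sp(2n))\<close>

lemma act2_add: "act2 a b (x + y) = act2 a b x + act2 a b y"
  by (simp add: act2_def algebra_simps)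
lemma act2_scaleU: "act2 a b (scaleU c x) = scaleU c (act2 a b x)"
  by (simp add: act2_def scaleU_mult_left scaleU_mult_right U_space.scale_right_diff_distrib)
lemma act2_zero: "act2 a b 0 = 0"
  by (simp add: act2_def)
lemma act2_sum: "act2 a b (sum f A) = (\<Sum>i\<in>A. act2 a b (f i))"
  by (induction A rule: infinite_finite_induct) (simp_all add: act2_zero act2_add)
lemma act2_mult: "act2 a b (x * y) = act2 a b x * y + x * act2 a b y"
  by (simp add: act2_def algebra_simps)

lemma act2_sig: "act2 a b (sig c) = scaleR (g_real c a) (sig b) + scaleR (g_real c b) (sig a)"
proof -
  have "act2 a b (sig c) = - (sig c * sig2 a b - sig2 a b * sig c)"
    by (simp add: act2_def)
  then show ?thesis by (simp add: sig_sig2_comm)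
qed

lemma act2_sig_prod: "act2 a b (sig_prod w) =
  (\<Sum>j<length w. scaleR (g_real (w!j) a) (sig_prod (w[j := b])) + scaleR (g_real (w!j) b) (sig_prod (w[j := a])))"
proof (induction w)
  case Nil then show ?case by (simp add: act2_def)
next
  case (Cons c w)
  have "act2 a b (sig_prod (c # w)) = act2 a b (sig c) * sig_prod w + sig c * act2 a b (sig_prod w)"
    by (simp add: sig_prod_Cons act2_mult)
  also have "\<dots> = scaleR (g_real c a) (sig_prod (b # w)) + scaleR (g_real c b) (sig_prod (a # w)) +
      (\<Sum>j<length w. scaleR (g_real (w!j) a) (sig_prod (c # w[j := b]))
                    + scaleR (g_real (w!j) b) (sig_prod (c # w[j := a])))"
    by (simp add: Cons.IH act2_sig sig_prod_Cons distrib_right sum_distrib_left distrib_left)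
  also have "\<dots> = (\<Sum>j<length (c # w). scaleR (g_real ((c # w)!j) a) (sig_prod ((c # w)[j := b]))
                    + scaleR (g_real ((c # w)!j) b) (sig_prod ((c # w)[j := a])))"
    by (simp only: length_Cons sum.lessThan_Suc_shift) simp
  finally show ?case .
qed

lemma sig_prod_swap_adjacent:
  "sig_prod (p @ [x, y] @ q) + sig_prod (p @ [y, x] @ q) \<in> deg_lt (length p + 2 + length q)"
proof -
  define k where "k = length p + 2 + length q"
  have "sig_prod (p @ [x, y] @ q) + sig_prod (p @ [y, x] @ q)
      = sig_prod p * (sig x * sig y + sig y * sig x) * sig_prod q"
    by (simp add: sig_prod_append sig_prod_Cons algebra_simps mult.assoc)
  also have "\<dots> = sig_prod (p @ q) * sig2 x y + sig_prod p * act2 x y (sig_prod q)"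
    by (simp add: sig_anticomm act2_def sig_prod_append algebra_simps mult.assoc)
  also have "\<dots> \<in> deg_lt k"
  proof (rule deg_lt_add)
    show "sig_prod (p @ q) * sig2 x y \<in> deg_lt k"
      by (rule sig_prod_mult_in_deg_lt) (auto simp: k_def intro: Usp.gen)
  next
    have "sig_prod p * act2 x y (sig_prod q) =
        (\<Sum>j<length q. scaleR (g_real (q!j) x) (sig_prod (p @ q[j := y]) * 1)
                     + scaleR (g_real (q!j) y) (sig_prod (p @ q[j := x]) * 1))"
      by (simp add: act2_sig_prod sum_distrib_left distrib_left sig_prod_append)
    also have "\<dots> \<in> deg_lt k"
      by (intro deg_lt_sum deg_lt_add deg_lt_scaleR sig_prod_mult_in_deg_lt) (auto simp: k_def intro: Usp.one)
    finally show "sig_prod p * act2 x y (sig_prod q) \<in> deg_lt k" .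
  qed
  finally show ?thesis by (simp add: k_def)
qed

definition list_swap :: "nat \<Rightarrow> nat \<Rightarrow> 'a list \<Rightarrow> 'a list" where
  "list_swap i j w = w[i := w!j, j := w!i]"

lemma length_list_swap [simp]: "length (list_swap i j w) = length w"
  by (simp add: list_swap_def)
lemma list_swap_commute: "list_swap i j w = list_swap j i w"
  by (cases "i = j") (auto simp: list_swap_def list_update_swap)
lemma permute_list_transpose:
  "a < length w \<Longrightarrow> b < length w \<Longrightarrow> permute_list (Transposition.transpose a b) w = list_swap a b w"
  by (intro nth_equalityI) (auto simp: permute_list_def list_swap_def nth_list_update Transposition.transpose_def)

lemma sig_prod_swap_Suc:
  assumes "Suc i < length w" shows "sig_prod (list_swap i (Suc i) w) + sig_prod w \<in> deg_lt (length w)"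
proof -
  define p q where "p = take i w" and "q = drop (Suc (Suc i)) w"
  have w: "w = p @ [w!i, w!Suc i] @ q" using assms by (simp add: p_def q_def Cons_nth_drop_Suc)
  have "list_swap i (Suc i) w = p @ [w!Suc i, w!i] @ q"
    using assms by (subst (1 2 3) w) (simp add: list_swap_def list_update_append nth_append p_def)
  then show ?thesis
    using sig_prod_swap_adjacent[of p "w!Suc i" "w!i" q] assms
    by (subst (2 3) w) (simp add: p_def q_def add.commute)
qed

lemma list_swap_via_Suc: "Suc i < j \<Longrightarrow> j < length w \<Longrightarrow>
  list_swap i j w = list_swap i (Suc i) (list_swap (Suc i) j (list_swap i (Suc i) w))"
  by (intro nth_equalityI) (auto simp: list_swap_def nth_list_update)

lemma sig_prod_swap: "i < j \<Longrightarrow> j < length w \<Longrightarrow> sig_prod (list_swap i j w) + sig_prod w \<in> deg_lt (length w)"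
proof (induction "j - i" arbitrary: i w)
  case 0 then show ?case by simp
next
  case (Suc d)
  show ?case
  proof (cases "j = Suc i")
    case True then show ?thesis using sig_prod_swap_Suc Suc.prems by simp
  next
    case False
    then have sij: "Suc i < j" using Suc.prems by simp
    define w1 where "w1 = list_swap i (Suc i) w"
    define w2 where "w2 = list_swap (Suc i) j w1"
    have A: "sig_prod w1 + sig_prod w \<in> deg_lt (length w)"
      using sig_prod_swap_Suc[of i w] sij Suc.prems by (simp add: w1_def)
    have B: "sig_prod w2 + sig_prod w1 \<in> deg_lt (length w)"
      using Suc.hyps(1)[of "Suc i" w1] Suc.hyps(2) sij Suc.prems by (simp add: w1_def w2_def)
    have C: "sig_prod (list_swap i (Suc i) w2) + sig_prod w2 \<in> deg_lt (length w)"
      using sig_prod_swap_Suc[of i w2] sij Suc.prems by (simp add: w1_def w2_def)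
    have "sig_prod (list_swap i j w) + sig_prod w
        = (sig_prod (list_swap i (Suc i) w2) + sig_prod w2) - (sig_prod w2 + sig_prod w1) + (sig_prod w1 + sig_prod w)"
      using list_swap_via_Suc[OF sij Suc.prems(2)] by (simp add: w1_def w2_def algebra_simps)
    also have "\<dots> \<in> deg_lt (length w)"
      by (rule deg_lt_add[OF deg_lt_diff[OF C B] A])
    finally show ?thesis .
  qed
qed

lemma sig_prod_permute:
  assumes "p permutes {..<n}"
  shows "\<forall>w. length w = n \<longrightarrow> sig_prod (permute_list p w) - scaleU (of_int (sign p)) (sig_prod w) \<in> deg_lt n"
  using assms finite_lessThan[of n]
proof (induction p rule: permutes_induct)
  case id then show ?case by (simp add: permute_list_def map_nth deg_lt_def U_space.span_zero)
next
  case (swap a b p)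
  show ?case
  proof (intro allI impI)
    fix w :: "'a idx list" assume lw: "length w = n"
    define t where "t = Transposition.transpose a b"
    define w' where "w' = permute_list t w"
    have ab: "a < n" "b < n" using swap by auto
    have w'_swap: "w' = list_swap a b w" using permute_list_transpose[of a w b] ab lw by (simp add: w'_def t_def)
    have perm_comp: "permute_list (t \<circ> p) w = permute_list p w'"
      using permute_list_compose[of p w t] \<open>p permutes {..<n}\<close> lw by (simp add: w'_def)
    have sign_comp: "sign (t \<circ> p) = - sign p"
      using sign_compose[OF permutation_swap_id permutes_imp_permutation[OF _ \<open>p permutes {..<n}\<close>]] \<open>a \<noteq> b\<close>
      by (simp add: t_def sign_swap_id)
    have IH: "sig_prod (permute_list p w') - scaleU (of_int (sign p)) (sig_prod w') \<in> deg_lt n"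
      using swap.IH lw by (simp add: w'_def)
    have "sig_prod w' + sig_prod w \<in> deg_lt n"
      using sig_prod_swap[of a b w] sig_prod_swap[of b a w] ab lw w'_swap list_swap_commute[of a b w] \<open>a \<noteq> b\<close>
      by (cases "a < b") simp_all
    then have "(sig_prod (permute_list p w') - scaleU (of_int (sign p)) (sig_prod w'))
        + scaleU (of_int (sign p)) (sig_prod w' + sig_prod w) \<in> deg_lt n"
      by (rule deg_lt_add[OF IH deg_lt_scaleU])
    then show "sig_prod (permute_list (Transposition.transpose a b \<circ> p) w)
        - scaleU (of_int (sign (Transposition.transpose a b \<circ> p))) (sig_prod w) \<in> deg_lt n"
      by (simp add: perm_comp sign_comp U_space.scale_right_distrib t_def[symmetric])
  qed
qed

lemma wedge_eq_sum_permute_list: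
  "wedge xs = (\<Sum>s\<in>{s. s permutes {..<length xs}}. scaleU (of_int (sign s)) (sig_prod (permute_list s xs)))"
  unfolding wedge_def sig_prod_def permute_list_def by (simp add: comp_def)

lemma wedge_minus_fact_sig_prod: "wedge w - scaleU (of_nat (fact (length w))) (sig_prod w) \<in> deg_lt (length w)"
proof -
  define S where "S = {s. s permutes {..<length w}}"
  have card_S: "card S = fact (length w)" unfolding S_def by (rule card_permutations) simp_all
  have "(\<Sum>s\<in>S. scaleU (of_int (sign s)) (scaleU (of_int (sign s)) (sig_prod w))) = (\<Sum>s\<in>S. sig_prod w)"
    by (rule sum.cong) (simp_all add: of_int_mult[symmetric])
  then have "wedge w - scaleU (of_nat (fact (length w))) (sig_prod w) =
     (\<Sum>s\<in>S. scaleU (of_int (sign s)) (sig_prod (permute_list s w) - scaleU (of_int (sign s)) (sig_prod w)))"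
    by (simp add: wedge_eq_sum_permute_list S_def[symmetric] U_space.scale_right_diff_distrib sum_subtractf
        U_space.sum_constant_scale card_S)
  also have "\<dots> \<in> deg_lt (length w)"
    using sig_prod_permute by (intro deg_lt_sum deg_lt_scaleU) (auto simp: S_def)
  finally show ?thesis .
qed

lemma wedge_repeated:
  assumes ij: "i < length xs" "j < length xs" "i \<noteq> j" and eq: "xs ! i = xs ! j"
  shows "wedge xs = 0"
proof -
  define S where "S = {s. s permutes {..<length xs}}"
  define t where "t = Transposition.transpose i j"
  define f where "f = (\<lambda>s. scaleU (of_int (sign s)) (sig_prod (permute_list s xs)))"
  have tp: "t permutes {..<length xs}" using ij by (simp add: t_def permutes_swap_id)
  have "xs[i := xs ! j, j := xs ! j] = xs" using eq by (metis list_update_id)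
  then have txs: "permute_list t xs = xs"
    using permute_list_transpose[of i xs j] ij eq by (simp add: t_def list_swap_def)
  have ft: "f (t \<circ> s) = - f s" if "s \<in> S" for s
  proof -
    have sp: "s permutes {..<length xs}" using that by (simp add: S_def)
    have "permute_list (t \<circ> s) xs = permute_list s xs"
      using permute_list_compose[OF sp, of t] txs by simp
    moreover have "sign (t \<circ> s) = - sign s"
      using sign_compose[OF permutes_imp_permutation[OF _ tp] permutes_imp_permutation[OF _ sp]] ij
      by (simp add: t_def sign_swap_id)
    ultimately show ?thesis by (simp add: f_def)
  qed
  have "sum f S = sum (\<lambda>s. f (t \<circ> s)) S"
    by (rule sum.reindex_bij_witness[of S "\<lambda>s. t \<circ> s" "\<lambda>s. t \<circ> s"])
       (use tp in \<open>auto simp: t_def o_assoc S_def permutes_compose\<close>)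
  also have "\<dots> = - sum f S" by (simp add: ft sum_negf)
  finally have "scaleU 2 (sum f S) = 0"
    by (simp add: U_space.scale_left_distrib[of 1 1, simplified] eq_neg_iff_add_eq_0)
  then show ?thesis by (simp add: wedge_eq_sum_permute_list f_def S_def)
qed

lemma wedge_permute_list:
  assumes p: "p permutes {..<length v}"
  shows "wedge (permute_list p v) = scaleU (of_int (sign p)) (wedge v)"
proof -
  define S where "S = {s. s permutes {..<length v}}"
  have pp: "permutation p" using permutes_imp_permutation[OF _ p] by simp
  have "wedge (permute_list p v) = (\<Sum>s\<in>S. scaleU (of_int (sign s)) (sig_prod (permute_list (p \<circ> s) v)))"
    unfolding wedge_eq_sum_permute_list S_def by (rule sum.cong) (simp_all add: permute_list_compose)
  also have "\<dots> = (\<Sum>s\<in>S. scaleU (of_int (sign p) * of_int (sign s)) (sig_prod (permute_list s v)))"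
  proof (rule sum.reindex_bij_witness[of S "\<lambda>s. inv p \<circ> s" "\<lambda>s. p \<circ> s"])
    fix s assume s: "s \<in> S"
    show "inv p \<circ> (p \<circ> s) = s" using permutes_inv_o(2)[OF p] by (simp add: o_assoc)
    show "p \<circ> s \<in> S" using s p by (simp add: S_def permutes_compose)
    have "permutation s" using s permutes_imp_permutation[of "{..<length v}" s] by (simp add: S_def)
    then have "sign p * sign (p \<circ> s) = sign s"
      using sign_compose[OF pp] by (simp add: mult.assoc[symmetric])
    then have "of_int (sign p) * of_int (sign (p \<circ> s)) = (of_int (sign s) :: complex)"
      by (metis of_int_mult)
    then show "scaleU (of_int (sign p) * of_int (sign (p \<circ> s))) (sig_prod (permute_list (p \<circ> s) v)) =
               scaleU (of_int (sign s)) (sig_prod (permute_list (p \<circ> s) v))" by simp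
  next
    fix s assume s: "s \<in> S"
    show "p \<circ> (inv p \<circ> s) = s" using permutes_inv_o(1)[OF p] by (simp add: o_assoc)
    show "inv p \<circ> s \<in> S" using s p by (simp add: S_def permutes_compose permutes_inv)
  qed
  also have "\<dots> = scaleU (of_int (sign p)) (wedge v)"
    unfolding wedge_eq_sum_permute_list S_def by (simp add: U_space.scale_sum_right)
  finally show ?thesis .
qed

definition wedge_set :: "'n::finite idx set \<Rightarrow> 'n U" where
  "wedge_set I = wedge (sorted_idx I)"

lemma length_distinct_idx_list: "distinct (xs :: 'n::finite idx list) \<Longrightarrow> length xs \<le> 2 * card (UNIV :: 'n set)"
proof -
  assume "distinct xs"
  then have "length xs = card (set xs)" by (simp add: distinct_card)
  also have "\<dots> \<le> card (UNIV :: 'n idx set)" by (rule card_mono) simp_all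
  also have "\<dots> = card ((UNIV :: 'n set) <+> (UNIV :: 'n set))" by simp
  also have "\<dots> = 2 * card (UNIV :: 'n set)" by (subst card_Plus) simp_all
  finally show ?thesis .
qed

lemma wedge_in_span_wedge_set: "wedge (xs :: 'n::finite idx list) \<in> U_space.span (range wedge_set)"
proof (cases "distinct xs")
  case True
  define ys where "ys = sorted_idx (set xs)"
  have "distinct ys" "set ys = set xs" using sorted_idx_props[of "set xs"] by (simp_all add: ys_def)
  then have "mset xs = mset ys" using True by (simp add: set_eq_iff_mset_eq_distinct)
  then obtain p where p: "p permutes {..<length ys}" "permute_list p ys = xs"
    by (rule mset_eq_permutation)
  have "wedge xs = scaleU (of_int (sign p)) (wedge_set (set xs))"
    using wedge_permute_list[OF p(1)] p(2) by (simp add: wedge_set_def ys_def)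
  then show ?thesis by (simp add: U_space.span_scale U_space.span_base)
next
  case False
  then obtain i j where "i < length xs" "j < length xs" "i \<noteq> j" "xs ! i = xs ! j"
    using distinct_conv_nth by blast
  then show ?thesis using wedge_repeated U_space.span_zero by metis
qed

lemma wedge_set_in_Omega: "wedge_set I \<in> (Omega :: 'n::finite U set)"
  unfolding wedge_set_def Omega_eq_span
  using length_distinct_idx_list sorted_idx_props by (blast intro: U_space.span_base)

lemma Omega_eq_span_wedge_set: "(Omega :: 'n::finite U set) = U_space.span (range wedge_set)"
proof
  show "Omega \<subseteq> U_space.span (range wedge_set)"
    unfolding Omega_eq_span using wedge_in_span_wedge_set
    by (intro U_space.span_minimal) auto
  show "U_space.span (range wedge_set) \<subseteq> (Omega :: 'n U set)"
    unfolding Omega_eq_span using wedge_set_in_Omega[unfolded Omega_eq_span]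
    by (intro U_space.span_minimal) auto
qed

lemma subspace_Omega: "U_space.subspace (Omega :: 'n::finite U set)"
  by (simp add: Omega_eq_span_wedge_set)

lemma span_range_finite_sum:
  fixes f :: "'a::finite \<Rightarrow> 'n U"
  shows "y \<in> U_space.span (range f) \<Longrightarrow> \<exists>c. y = (\<Sum>I\<in>UNIV. scaleU (c I) (f I))"
proof (induction y rule: U_space.span_induct_alt)
  case base show ?case by (rule exI[of _ "\<lambda>_. 0"]) simp
next
  case (step c v y)
  obtain I0 where v: "v = f I0" using step.hyps(1) by blast
  obtain c' where y: "y = (\<Sum>I\<in>UNIV. scaleU (c' I) (f I))" using step.IH by blast
  have "(\<Sum>I\<in>UNIV. scaleU (if I = I0 then c else 0) (f I)) = scaleU c v"
    by (simp add: v if_distrib[of "\<lambda>c. scaleU c _"] cong: if_cong)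
  then have "(\<Sum>I\<in>UNIV. scaleU (c' I + (if I = I0 then c else 0)) (f I)) = scaleU c v + y"
    by (simp add: y scaleU_add_left sum.distrib add.commute)
  then show ?case by metis
qed

definition Omega_Usp_span :: "'n::finite U set" where
  "Omega_Usp_span = U_space.span {w * u | w u. w \<in> Omega \<and> u \<in> Usp}"

lemma wedge_mult_in_Omega_Usp_span:
  assumes "u \<in> Usp" shows "wedge v * u \<in> (Omega_Usp_span :: 'n::finite U set)"
proof (cases "length v \<le> 2 * card (UNIV :: 'n set)")
  case True
  then have "wedge v \<in> Omega" unfolding Omega_eq_span by (intro U_space.span_base) blast
  then show ?thesis unfolding Omega_Usp_span_def using assms by (intro U_space.span_base) blast
next
  case False
  then have "\<not> distinct v" using length_distinct_idx_list[of v] by auto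
  then obtain i j where "i < length v" "j < length v" "i \<noteq> j" "v ! i = v ! j"
    using distinct_conv_nth by blast
  then show ?thesis by (simp add: wedge_repeated Omega_Usp_span_def U_space.span_zero)
qed

lemma sig_prod_mult_in_Omega_Usp_span: "u \<in> Usp \<Longrightarrow> sig_prod v * u \<in> (Omega_Usp_span :: 'n::finite U set)"
proof (induction "length v" arbitrary: v u rule: less_induct)
  case less
  define k where "k = length v"
  define l where "l = wedge v - scaleU (of_nat (fact k)) (sig_prod v)"
  have "l * u \<in> deg_lt k"
    using deg_lt_mult_Usp[OF wedge_minus_fact_sig_prod less.prems] by (simp add: l_def k_def)
  moreover have "deg_lt k \<subseteq> (Omega_Usp_span :: 'n U set)"
    unfolding deg_lt_def Omega_Usp_span_def
    by (intro U_space.span_minimal U_space.subspace_span) (use less.hyps in \<open>auto simp: k_def Omega_Usp_span_def\<close>)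
  ultimately have lu: "l * u \<in> Omega_Usp_span" by blast
  have "sig_prod v = scaleU (1 / of_nat (fact k)) (wedge v - l)"
    by (simp add: l_def)
  then have "sig_prod v * u = scaleU (1 / of_nat (fact k)) (wedge v * u - l * u)"
    by (simp add: scaleU_mult_left left_diff_distrib)
  then show ?case
    using wedge_mult_in_Omega_Usp_span[OF less.prems] lu unfolding Omega_Usp_span_def
    by (simp add: U_space.span_scale U_space.span_diff)
qed

lemma span_sig_prod_mult:
  "x \<in> U_space.span (range sig_prod) \<Longrightarrow> y \<in> U_space.span (range sig_prod) \<Longrightarrow> x * y \<in> U_space.span (range sig_prod)"
proof (induction x rule: U_space.span_induct_alt)
  case base then show ?case by (simp add: U_space.span_zero)
next
  case (step c v x)
  obtain w where v: "v = sig_prod w" using step.hyps(1) by blast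
  have "sig_prod w * y \<in> U_space.span (range sig_prod)" using step.prems
  proof (induction y rule: U_space.span_induct_alt)
    case base then show ?case by (simp add: U_space.span_zero)
  next
    case (step c' v' y')
    obtain w' where "v' = sig_prod w'" using step.hyps(1) by blast
    then have "sig_prod w * (scaleU c' v' + y') = scaleU c' (sig_prod (w @ w')) + sig_prod w * y'"
      by (simp add: distrib_left scaleU_mult_right sig_prod_append)
    then show ?case using step.IH by (simp add: U_space.span_add U_space.span_scale U_space.span_base)
  qed
  then show ?case using step.IH step.prems
    by (simp add: v distrib_right scaleU_mult_left U_space.span_add U_space.span_scale)
qed

lemma in_span_sig_prod: "(x :: 'n::finite U) \<in> U_space.span (range sig_prod)"
proof (induction x rule: U.abs_induct)
  case (1 y)
  show ?case
  proof (induction y)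
    case (G g)
    show ?case
    proof (cases g)
      case (OddG a)
      have "abs_U (G g) = sig_prod [a]" by (simp add: OddG sig_prod_Cons sig.abs_eq)
      then show ?thesis by (metis U_space.span_base rangeI)
    next
      case (EvenG a b)
      have "abs_U (G g) = sig_prod [a, b] + sig_prod [b, a]"
        by (simp add: EvenG sig_prod_Cons sig2.abs_eq[symmetric] sig_anticomm)
      then show ?thesis by (metis U_space.span_base rangeI U_space.span_add)
    qed
  next
    case Zero_e then show ?case by (simp add: zero_U.abs_eq[symmetric] U_space.span_zero)
  next
    case Onee
    have "abs_U Onee = sig_prod []" by (simp add: one_U.abs_eq[symmetric])
    then show ?case by (metis U_space.span_base rangeI)
  next
    case (Ad x y) then show ?case by (simp add: plus_U.abs_eq[symmetric] U_space.span_add)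
  next
    case (Mu x y) then show ?case by (simp add: times_U.abs_eq[symmetric] span_sig_prod_mult)
  next
    case (Sc c x) then show ?case by (simp add: scaleU.abs_eq[symmetric] U_space.span_scale)
  qed
qed

lemma in_Omega_Usp_span: "(x :: 'n::finite U) \<in> Omega_Usp_span"
proof -
  have "range sig_prod \<subseteq> (Omega_Usp_span :: 'n U set)"
    using sig_prod_mult_in_Omega_Usp_span[OF Usp.one] by auto
  then show ?thesis
    using in_span_sig_prod[of x] U_space.span_minimal[of "range sig_prod" Omega_Usp_span]
    unfolding Omega_Usp_span_def by auto
qed

section \<open>\<Omega> is an sp(2n)-submodule\<close>

lemma permute_list_update:
  assumes s: "s permutes {..<length xs}" and i: "i < length xs"
  shows "(permute_list s xs)[i := c] = permute_list s (xs[s i := c])"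
proof (rule nth_equalityI)
  fix k assume "k < length ((permute_list s xs)[i := c])"
  then have k: "k < length xs" by simp
  have s': "s permutes {..<length (xs[s i := c])}" using s by simp
  have "s k < length xs" "s i < length xs" using permutes_in_image[OF s] k i by simp_all
  moreover have "s k = s i \<longleftrightarrow> k = i" "s i = s k \<longleftrightarrow> i = k" using permutes_inj[OF s] by (auto dest: injD)
  ultimately show "(permute_list s xs)[i := c] ! k = permute_list s (xs[s i := c]) ! k"
    using k i by (simp add: permute_list_nth[OF s'] permute_list_nth[OF s] nth_list_update)
qed simp

lemma act2_wedge:
  "act2 a b (wedge xs) = (\<Sum>j<length xs.
      scaleR (g_real (xs!j) a) (wedge (xs[j := b])) + scaleR (g_real (xs!j) b) (wedge (xs[j := a])))"
proof -
  define n where "n = length xs"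
  define S where "S = {s. s permutes {..<n}}"
  define F where "F = (\<lambda>s j. scaleR (g_real (xs!j) a) (sig_prod (permute_list s (xs[j := b]))) +
                             scaleR (g_real (xs!j) b) (sig_prod (permute_list s (xs[j := a]))))"
  have act2_term: "act2 a b (sig_prod (permute_list s xs)) = (\<Sum>j<n. F s j)" if "s \<in> S" for s
  proof -
    have sp: "s permutes {..<length xs}" using that by (simp add: S_def n_def)
    have "act2 a b (sig_prod (permute_list s xs)) = (\<Sum>i<n. F s (s i))"
      unfolding act2_sig_prod F_def n_def
      by (rule sum.cong) (simp_all add: permute_list_nth[OF sp] permute_list_update[OF sp])
    also have "\<dots> = (\<Sum>j<n. F s j)"
      by (rule sum.reindex_bij_betw) (use sp in \<open>simp add: n_def permutes_imp_bij\<close>)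
    finally show ?thesis .
  qed
  have "act2 a b (wedge xs) = (\<Sum>s\<in>S. scaleU (of_int (sign s)) (\<Sum>j<n. F s j))"
    unfolding wedge_eq_sum_permute_list act2_sum act2_scaleU S_def[symmetric] n_def[symmetric]
    by (rule sum.cong) (simp_all add: act2_term)
  also have "\<dots> = (\<Sum>j<n. \<Sum>s\<in>S. scaleU (of_int (sign s)) (F s j))"
    by (simp add: U_space.scale_sum_right sum.swap[of _ S])
  also have "\<dots> = (\<Sum>j<n. scaleR (g_real (xs!j) a) (wedge (xs[j := b])) + scaleR (g_real (xs!j) b) (wedge (xs[j := a])))"
    by (rule sum.cong) (simp_all add: F_def wedge_eq_sum_permute_list S_def n_def U_space.scale_right_distrib
        sum.distrib scaleU_scaleR_commute scaleR_sum_right)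
  finally show ?thesis by (simp add: n_def)
qed

lemma act2_Omega: "y \<in> (Omega :: 'n::finite U set) \<Longrightarrow> act2 a b y \<in> Omega"
  unfolding Omega_eq_span
proof (induction y rule: U_space.span_induct_alt)
  case base then show ?case by (simp add: act2_zero U_space.span_zero)
next
  case (step c v y)
  then obtain xs where v: "v = wedge xs" "length xs \<le> 2 * card (UNIV :: 'n set)" by blast
  have "wedge (xs[j := d]) \<in> U_space.span {wedge xs | xs. length xs \<le> 2 * card (UNIV :: 'n set)}" for j d
    using v(2) by (intro U_space.span_base) force
  then have "act2 a b v \<in> U_space.span {wedge xs | xs. length xs \<le> 2 * card (UNIV :: 'n set)}"
    unfolding v(1) act2_wedge scaleR_U_def by (intro U_space.span_sum U_space.span_add U_space.span_scale)
  then show ?case using step.IH by (simp add: act2_add act2_scaleU U_space.span_add U_space.span_scale)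
qed

section \<open>Independence of the wedges over U(sp(2n))\<close>

lemma sum_fun_apply: "(sum f A) x = (\<Sum>a\<in>A. f a x)"
  by (induction A rule: infinite_finite_induct) simp_all

lemma on_vacuum_wedge_set:
  assumes "card I \<le> card K"
  shows "on_vacuum (wedge_set I) K = (if K = I then scaleU (of_nat (fact (card I))) 1 else 0)"
proof -
  define w where "w = sorted_idx I"
  have lw: "length w = card I" using sorted_idx_props[of I] by (simp add: w_def)
  define l where "l = wedge w - scaleU (of_nat (fact (card I))) (sig_prod w)"
  have "l \<in> deg_lt (card I)" using wedge_minus_fact_sig_prod[of w] lw by (simp add: l_def)
  then have "on_vacuum l K = 0" using on_vacuum_deg_lt assms by fastforce
  moreover have "wedge_set I = l + scaleU (of_nat (fact (card I))) (sig_prod w)"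
    by (simp add: l_def wedge_set_def w_def)
  ultimately show ?thesis
    by (simp add: on_vacuum_add on_vacuum_scaleU on_vacuum_sig_prod_sorted w_def scaleM_def basis_vec_apply)
qed

lemma wedge_set_mult_independent:
  fixes v :: "'n::finite idx set \<Rightarrow> 'n U"
  assumes vU: "\<And>I. v I \<in> Usp" and zero: "(\<Sum>I\<in>UNIV. wedge_set I * v I) = 0"
  shows "v I = 0"
proof (rule ccontr)
  assume "v I \<noteq> 0"
  define N where "N = {I. v I \<noteq> 0}"
  have "card ` N \<noteq> {}" using \<open>v I \<noteq> 0\<close> by (auto simp: N_def)
  then have "Max (card ` N) \<in> card ` N" by (intro Max_in) simp_all
  then obtain I0 where I0: "I0 \<in> N" "card I0 = Max (card ` N)" by auto
  have maxc: "v J \<noteq> 0 \<Longrightarrow> card J \<le> card I0" for J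
    using I0(2) by (auto simp: N_def)
  have "on_vacuum (\<Sum>I\<in>UNIV. wedge_set I * v I) I0 = (\<Sum>I\<in>UNIV. on_vacuum (wedge_set I) I0 * v I)"
    by (simp add: on_vacuum_sum on_vacuum_mult_Usp[OF vU] rmult_def sum_fun_apply)
  also have "\<dots> = (\<Sum>I\<in>UNIV. if I = I0 then scaleU (of_nat (fact (card I0))) (v I0) else 0)"
  proof (rule sum.cong)
    fix J :: "'n idx set"
    show "on_vacuum (wedge_set J) I0 * v J = (if J = I0 then scaleU (of_nat (fact (card I0))) (v I0) else 0)"
      using maxc[of J] on_vacuum_wedge_set[of J I0] I0(1)
      by (cases "v J = 0") (auto simp: N_def scaleU_mult_left)
  qed simp
  finally have "scaleU (of_nat (fact (card I0))) (v I0) = 0" using zero by (simp add: on_vacuum_zero)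
  then show False using I0(1) by (simp add: N_def)
qed

section \<open>The tensor product and the multiplication map\<close>

definition fscale :: "complex \<Rightarrow> ('x \<Rightarrow> complex) \<Rightarrow> 'x \<Rightarrow> complex" where
  "fscale c f = (\<lambda>p. c * f p)"

interpretation fun_space: vector_space fscale
  by unfold_locales (simp_all add: fscale_def fun_eq_iff algebra_simps)

lemma sum_fun_eq_lambda: "(\<Sum>a\<in>A. g a) = (\<lambda>p. \<Sum>a\<in>A. g a p)"
  by (rule ext) (rule sum_fun_apply)

lemma RelSp_eq_span: "RelSp A B = fun_space.span (bilin_rels A B)"
  unfolding RelSp_def fun_space.span_explicit fscale_def sum_fun_eq_lambda by blast

lemma bilin_rel_add_left:
  "x \<in> A \<Longrightarrow> x' \<in> A \<Longrightarrow> y \<in> B \<Longrightarrow> delta (x + x') y - delta x y - delta x' y \<in> fun_space.span (bilin_rels A B)"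
  by (rule fun_space.span_base) (unfold bilin_rels_def fun_diff_def fscale_def, blast)
lemma bilin_rel_add_right:
  "x \<in> A \<Longrightarrow> y \<in> B \<Longrightarrow> y' \<in> B \<Longrightarrow> delta x (y + y') - delta x y - delta x y' \<in> fun_space.span (bilin_rels A B)"
  by (rule fun_space.span_base) (unfold bilin_rels_def fun_diff_def fscale_def, blast)
lemma bilin_rel_scale_left:
  "x \<in> A \<Longrightarrow> y \<in> B \<Longrightarrow> delta (scaleU c x) y - fscale c (delta x y) \<in> fun_space.span (bilin_rels A B)"
  by (rule fun_space.span_base) (unfold bilin_rels_def fun_diff_def fscale_def, blast)
lemma bilin_rel_scale_right:
  "x \<in> A \<Longrightarrow> y \<in> B \<Longrightarrow> delta x (scaleU c y) - fscale c (delta x y) \<in> fun_space.span (bilin_rels A B)"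
  by (rule fun_space.span_base) (unfold bilin_rels_def fun_diff_def fscale_def, blast)

lemma delta_zero_left_in_span: "0 \<in> A \<Longrightarrow> y \<in> B \<Longrightarrow> delta 0 y \<in> fun_space.span (bilin_rels A B)"
  using fun_space.span_neg[OF bilin_rel_add_left[of 0 A 0 y B]] by simp
lemma delta_zero_right_in_span: "x \<in> A \<Longrightarrow> 0 \<in> B \<Longrightarrow> delta x 0 \<in> fun_space.span (bilin_rels A B)"
  using fun_space.span_neg[OF bilin_rel_add_right[of x A 0 B 0]] by simp

lemma span_diff_trans:
  "a - b \<in> fun_space.span S \<Longrightarrow> b - c \<in> fun_space.span S \<Longrightarrow> a - c \<in> fun_space.span S"
  using fun_space.span_add[of "a - b" S "b - c"] by (simp add: algebra_simps)

lemma delta_sum_right: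
  assumes x: "x \<in> A" and B: "U_space.subspace B" and ys: "\<And>i. i \<in> T \<Longrightarrow> ys i \<in> B"
  shows "delta x (\<Sum>i\<in>T. ys i) - (\<Sum>i\<in>T. delta x (ys i)) \<in> fun_space.span (bilin_rels A B)"
  using ys
proof (induction T rule: infinite_finite_induct)
  case (insert i T)
  have "(\<Sum>i\<in>T. ys i) \<in> B" using insert B by (intro U_space.subspace_sum) auto
  then have F1: "delta x (ys i + (\<Sum>i\<in>T. ys i)) - (delta x (ys i) + delta x (\<Sum>i\<in>T. ys i))
      \<in> fun_space.span (bilin_rels A B)"
    using bilin_rel_add_right[of x A "ys i" B] insert x by (simp add: diff_diff_add)
  have "delta x (\<Sum>i\<in>T. ys i) - (\<Sum>i\<in>T. delta x (ys i)) \<in> fun_space.span (bilin_rels A B)"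
    using insert.IH insert.prems by blast
  then have F2: "(delta x (ys i) + delta x (\<Sum>i\<in>T. ys i)) - (delta x (ys i) + (\<Sum>i\<in>T. delta x (ys i)))
      \<in> fun_space.span (bilin_rels A B)"
    by (simp only: add_diff_cancel_left)
  have "sum ys (insert i T) = ys i + sum ys T"
    "(\<Sum>i\<in>insert i T. delta x (ys i)) = delta x (ys i) + (\<Sum>i\<in>T. delta x (ys i))"
    using insert(1,2) by (rule sum.insert)+
  then show ?case using span_diff_trans[OF F1 F2] by (simp only:)
qed (simp_all add: delta_zero_right_in_span x U_space.subspace_0[OF B])

lemma delta_sum_left:
  assumes A: "U_space.subspace A" and y: "y \<in> B" and xs: "\<And>i. i \<in> T \<Longrightarrow> xs i \<in> A"
  shows "(\<Sum>i\<in>T. delta (xs i) y) - delta (\<Sum>i\<in>T. xs i) y \<in> fun_space.span (bilin_rels A B)"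
  using xs
proof (induction T rule: infinite_finite_induct)
  case (insert i T)
  have "(\<Sum>i\<in>T. xs i) \<in> A" using insert A by (intro U_space.subspace_sum) auto
  then have F2: "(delta (xs i) y + delta (\<Sum>i\<in>T. xs i) y) - delta (xs i + (\<Sum>i\<in>T. xs i)) y
      \<in> fun_space.span (bilin_rels A B)"
    using fun_space.span_neg[OF bilin_rel_add_left[of "xs i" A _ y B]] insert y
    by (simp add: diff_diff_add)
  have "(\<Sum>i\<in>T. delta (xs i) y) - delta (\<Sum>i\<in>T. xs i) y \<in> fun_space.span (bilin_rels A B)"
    using insert.IH insert.prems by blast
  then have F1: "(delta (xs i) y + (\<Sum>i\<in>T. delta (xs i) y)) - (delta (xs i) y + delta (\<Sum>i\<in>T. xs i) y)
      \<in> fun_space.span (bilin_rels A B)"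
    by (simp only: add_diff_cancel_left)
  have "sum xs (insert i T) = xs i + sum xs T"
    "(\<Sum>i\<in>insert i T. delta (xs i) y) = delta (xs i) y + (\<Sum>i\<in>T. delta (xs i) y)"
    using insert(1,2) by (rule sum.insert)+
  then show ?case using span_diff_trans[OF F1 F2] by (simp only:)
qed (simp_all add: fun_space.span_neg delta_zero_left_in_span y U_space.subspace_0[OF A])

lemma delta_scaled_sum_right:
  assumes A: "U_space.subspace A" and B: "U_space.subspace B" and x: "x \<in> A"
    and w: "\<And>i. i \<in> T \<Longrightarrow> w i \<in> B"
  shows "delta x (\<Sum>i\<in>T. scaleU (c i) (w i)) - (\<Sum>i\<in>T. delta (scaleU (c i) x) (w i))
    \<in> fun_space.span (bilin_rels A B)"
proof (rule span_diff_trans)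
  show "delta x (\<Sum>i\<in>T. scaleU (c i) (w i)) - (\<Sum>i\<in>T. delta x (scaleU (c i) (w i)))
      \<in> fun_space.span (bilin_rels A B)"
    using x w by (intro delta_sum_right B U_space.subspace_scale)
  have "(\<Sum>i\<in>T. (delta x (scaleU (c i) (w i)) - fscale (c i) (delta x (w i)))
        - (delta (scaleU (c i) x) (w i) - fscale (c i) (delta x (w i)))) \<in> fun_space.span (bilin_rels A B)"
    using x w
    by (intro fun_space.span_sum fun_space.span_diff bilin_rel_scale_left bilin_rel_scale_right) auto
  then show "(\<Sum>i\<in>T. delta x (scaleU (c i) (w i))) - (\<Sum>i\<in>T. delta (scaleU (c i) x) (w i))
      \<in> fun_space.span (bilin_rels A B)"
    by (simp add: sum_subtractf)
qed

definition fin_supp :: "('x \<Rightarrow> complex) \<Rightarrow> bool" where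
  "fin_supp f \<longleftrightarrow> finite {p. f p \<noteq> 0}"

lemma fun_space_subspace_fin_supp: "fun_space.subspace {f. fin_supp f}"
proof (rule fun_space.subspaceI)
  fix f g :: "'x \<Rightarrow> complex" and c :: complex
  assume "f \<in> {f. fin_supp f}" "g \<in> {f. fin_supp f}"
  then show "f + g \<in> {f. fin_supp f}" and "fscale c f \<in> {f. fin_supp f}"
    unfolding fin_supp_def fscale_def
    by (auto intro: finite_subset[of _ "{p. f p \<noteq> 0} \<union> {p. g p \<noteq> 0}"] finite_subset[of _ "{p. f p \<noteq> 0}"])
qed (simp add: fin_supp_def)

lemma fin_supp_delta: "fin_supp (delta x y)"
  unfolding fin_supp_def delta_def by (rule finite_subset[of _ "{(x, y)}"]) auto

lemma fin_supp_of_FSp: "f \<in> FSp A B \<Longrightarrow> fin_supp f"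
  unfolding FSp_def fin_supp_def by blast

lemma fin_supp_add: "fin_supp f \<Longrightarrow> fin_supp g \<Longrightarrow> fin_supp (f + g)"
  using fun_space.subspace_add[OF fun_space_subspace_fin_supp] by blast
lemma fin_supp_sum: "(\<And>i. i \<in> T \<Longrightarrow> fin_supp (g i)) \<Longrightarrow> fin_supp (\<Sum>i\<in>T. g i)"
  using fun_space.subspace_sum[OF fun_space_subspace_fin_supp, of T g] by simp
lemma fin_supp_diff: "fin_supp f \<Longrightarrow> fin_supp g \<Longrightarrow> fin_supp (f - g)"
  using fun_space.subspace_diff[OF fun_space_subspace_fin_supp] by blast
lemma fin_supp_scale: "fin_supp f \<Longrightarrow> fin_supp (fscale c f)"
  using fun_space.subspace_scale[OF fun_space_subspace_fin_supp] by blast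

definition tensor_mult :: "('n U \<times> 'n U \<Rightarrow> complex) \<Rightarrow> 'n U" where
  "tensor_mult f = (\<Sum>p | f p \<noteq> 0. scaleU (f p) (snd p * fst p))"

lemma tensor_mult_eq_sum_superset:
  assumes "finite S" "{p. f p \<noteq> 0} \<subseteq> S"
  shows "tensor_mult f = (\<Sum>p\<in>S. scaleU (f p) (snd p * fst p))"
  unfolding tensor_mult_def by (rule sum.mono_neutral_left) (use assms in auto)

lemma tensor_mult_add:
  assumes "fin_supp f" "fin_supp g" shows "tensor_mult (f + g) = tensor_mult f + tensor_mult g"
proof -
  define S where "S = {p. f p \<noteq> 0} \<union> {p. g p \<noteq> 0}"
  have S: "finite S" using assms by (simp add: S_def fin_supp_def)
  have "tensor_mult (f + g) = (\<Sum>p\<in>S. scaleU (f p + g p) (snd p * fst p))"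
    by (subst tensor_mult_eq_sum_superset[OF S]) (auto simp: S_def)
  also have "\<dots> = tensor_mult f + tensor_mult g"
    by (simp add: tensor_mult_eq_sum_superset[OF S] S_def subset_iff scaleU_add_left sum.distrib)
  finally show ?thesis .
qed

lemma tensor_mult_scale:
  assumes "fin_supp f" shows "tensor_mult (fscale c f) = scaleU c (tensor_mult f)"
proof -
  have S: "finite {p. f p \<noteq> 0}" using assms by (simp add: fin_supp_def)
  have "tensor_mult (fscale c f) = (\<Sum>p | f p \<noteq> 0. scaleU (c * f p) (snd p * fst p))"
    unfolding fscale_def by (rule tensor_mult_eq_sum_superset[OF S]) auto
  then show ?thesis by (simp add: tensor_mult_def U_space.scale_sum_right)
qed

lemma tensor_mult_zero: "tensor_mult 0 = 0"
  by (simp add: tensor_mult_def)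

lemma tensor_mult_delta: "tensor_mult (delta x y) = y * x"
proof -
  have "tensor_mult (delta x y) = (\<Sum>p\<in>{(x, y)}. scaleU (delta x y p) (snd p * fst p))"
    by (rule tensor_mult_eq_sum_superset) (auto simp: delta_def split: if_splits)
  then show ?thesis by (simp add: delta_def)
qed

lemma tensor_mult_sum:
  "(\<And>i. i \<in> T \<Longrightarrow> fin_supp (g i)) \<Longrightarrow> tensor_mult (\<Sum>i\<in>T. g i) = (\<Sum>i\<in>T. tensor_mult (g i))"
proof (induction T rule: infinite_finite_induct)
  case (insert i T)
  then show ?case by (simp add: tensor_mult_add fin_supp_sum del: plus_fun_apply)
qed (simp_all add: tensor_mult_zero)

lemma tensor_mult_diff:
  assumes "fin_supp f" "fin_supp g" shows "tensor_mult (f - g) = tensor_mult f - tensor_mult g"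
proof -
  have "f - g = f + fscale (-1) g" by (simp add: fscale_def fun_eq_iff)
  then have "tensor_mult (f - g) = tensor_mult f + tensor_mult (fscale (-1) g)"
    using assms by (simp only: tensor_mult_add fin_supp_scale)
  also have "tensor_mult (fscale (-1) g) = scaleU (-1) (tensor_mult g)"
    by (rule tensor_mult_scale[OF assms(2)])
  finally show ?thesis by (simp only: U_space.scale_minus_left U_space.scale_one diff_conv_add_uminus)
qed

lemma fin_supp_tensor_mult_bilin_rel:
  assumes "r \<in> bilin_rels A B" shows "fin_supp r \<and> tensor_mult r = 0"
proof -
  from assms consider
      x x' y where "r = delta (x + x') y - delta x y - delta x' y"
    | x y y' where "r = delta x (y + y') - delta x y - delta x y'"
    | c x y where "r = delta (scaleU c x) y - fscale c (delta x y)"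
    | c x y where "r = delta x (scaleU c y) - fscale c (delta x y)"
    unfolding bilin_rels_def fun_diff_def fscale_def by blast
  then show ?thesis
    by cases (simp_all add: fin_supp_diff fin_supp_delta fin_supp_scale tensor_mult_diff tensor_mult_scale
        tensor_mult_delta distrib_left distrib_right scaleU_mult_left scaleU_mult_right)
qed

lemma fin_supp_tensor_mult_span_bilin_rels:
  "h \<in> fun_space.span (bilin_rels A B) \<Longrightarrow> fin_supp h \<and> tensor_mult h = 0"
proof (induction h rule: fun_space.span_induct_alt)
  case base then show ?case by (simp add: fin_supp_def tensor_mult_def)
next
  case (step c r h)
  then show ?case
    using fin_supp_tensor_mult_bilin_rel[OF step.hyps(1)]
    by (simp add: fin_supp_add fin_supp_scale tensor_mult_add tensor_mult_scale del: plus_fun_apply)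
qed

lemma fun_eq_sum_fscale_delta:
  assumes "finite S" "{p. f p \<noteq> 0} \<subseteq> S"
  shows "f = (\<Sum>q\<in>S. fscale (f q) (delta (fst q) (snd q)))"
proof (rule ext)
  fix p
  have "(\<Sum>q\<in>S. fscale (f q) (delta (fst q) (snd q))) p = (\<Sum>q\<in>S. f q * delta (fst q) (snd q) p)"
    by (simp add: sum_fun_apply fscale_def)
  also have "\<dots> = (\<Sum>q\<in>S. if q = p then f p else 0)"
    by (rule sum.cong) (auto simp: delta_def)
  also have "\<dots> = f p" using assms by auto
  finally show "f p = (\<Sum>q\<in>S. fscale (f q) (delta (fst q) (snd q))) p" by simp
qed

lemma FSp_congruent_sum_delta:
  assumes "f \<in> FSp A B"
  shows "f - (\<Sum>q | f q \<noteq> 0. delta (scaleU (f q) (fst q)) (snd q)) \<in> fun_space.span (bilin_rels A B)"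
proof -
  define S where "S = {p. f p \<noteq> 0}"
  have fS: "finite S" and SAB: "S \<subseteq> A \<times> B" using assms by (auto simp: FSp_def S_def)
  have "(\<Sum>q\<in>S. fscale (f q) (delta (fst q) (snd q)) - delta (scaleU (f q) (fst q)) (snd q))
      \<in> fun_space.span (bilin_rels A B)"
  proof (rule fun_space.span_sum)
    fix q assume "q \<in> S"
    then show "fscale (f q) (delta (fst q) (snd q)) - delta (scaleU (f q) (fst q)) (snd q)
        \<in> fun_space.span (bilin_rels A B)"
      using fun_space.span_neg[OF bilin_rel_scale_left[of "fst q" A "snd q" B "f q"]] SAB by auto
  qed
  then show ?thesis
    using fun_eq_sum_fscale_delta[OF fS, of f] by (simp only: sum_subtractf S_def)
qed

lemma tensor_normal_form:
  fixes f :: "'n::finite U \<times> 'n U \<Rightarrow> complex"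
  assumes "f \<in> FSp Usp Omega"
  obtains v where "\<And>I. v I \<in> Usp"
    and "f - (\<Sum>I\<in>UNIV. delta (v I) (wedge_set I)) \<in> fun_space.span (bilin_rels Usp Omega)"
proof -
  define S where "S = {p. f p \<noteq> 0}"
  have fS: "finite S" and SAB: "S \<subseteq> Usp \<times> Omega" using assms by (auto simp: FSp_def S_def)
  have ex: "\<forall>q\<in>S. \<exists>c. snd q = (\<Sum>I\<in>UNIV. scaleU (c I) (wedge_set I))"
  proof
    fix q assume "q \<in> S"
    then have "snd q \<in> U_space.span (range wedge_set)" using SAB Omega_eq_span_wedge_set by auto
    then show "\<exists>c. snd q = (\<Sum>I\<in>UNIV. scaleU (c I) (wedge_set I))" by (rule span_range_finite_sum)
  qed
  obtain C where C: "\<forall>q\<in>S. snd q = (\<Sum>I\<in>UNIV. scaleU (C q I) (wedge_set I))"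
    using bchoice[OF ex] by blast
  define x where "x = (\<lambda>q. scaleU (f q) (fst q))"
  have xU: "x q \<in> Usp" if "q \<in> S" for q
  proof -
    have "fst q \<in> Usp" using SAB that by auto
    then show ?thesis by (simp add: x_def Usp.scl)
  qed
  define v where "v = (\<lambda>I. \<Sum>q\<in>S. scaleU (C q I) (x q))"
  have vU: "v I \<in> Usp" for I
    unfolding v_def using xU by (intro U_space.subspace_sum[OF subspace_Usp] U_space.subspace_scale[OF subspace_Usp])
  have step1: "f - (\<Sum>q\<in>S. delta (x q) (snd q)) \<in> fun_space.span (bilin_rels Usp Omega)"
    unfolding S_def x_def by (rule FSp_congruent_sum_delta[OF assms])
  have "(\<Sum>q\<in>S. delta (x q) (snd q) - (\<Sum>I\<in>UNIV. delta (scaleU (C q I) (x q)) (wedge_set I)))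
      \<in> fun_space.span (bilin_rels Usp Omega)"
  proof (rule fun_space.span_sum)
    fix q assume q: "q \<in> S"
    show "delta (x q) (snd q) - (\<Sum>I\<in>UNIV. delta (scaleU (C q I) (x q)) (wedge_set I))
        \<in> fun_space.span (bilin_rels Usp Omega)"
      using delta_scaled_sum_right[of Usp Omega "x q" UNIV wedge_set "C q",
          OF subspace_Usp subspace_Omega xU[OF q] wedge_set_in_Omega] C q
      by simp
  qed
  then have step2: "(\<Sum>q\<in>S. delta (x q) (snd q)) - (\<Sum>q\<in>S. \<Sum>I\<in>UNIV. delta (scaleU (C q I) (x q)) (wedge_set I))
      \<in> fun_space.span (bilin_rels Usp Omega)"
    by (simp only: sum_subtractf)
  have "(\<Sum>I\<in>UNIV. (\<Sum>q\<in>S. delta (scaleU (C q I) (x q)) (wedge_set I)) - delta (v I) (wedge_set I))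
      \<in> fun_space.span (bilin_rels Usp Omega)"
    unfolding v_def using xU
    by (intro fun_space.span_sum delta_sum_left subspace_Usp wedge_set_in_Omega U_space.subspace_scale[OF subspace_Usp])
  then have step3: "(\<Sum>q\<in>S. \<Sum>I\<in>UNIV. delta (scaleU (C q I) (x q)) (wedge_set I))
      - (\<Sum>I\<in>UNIV. delta (v I) (wedge_set I)) \<in> fun_space.span (bilin_rels Usp Omega)"
    by (simp only: sum_subtractf sum.swap[of _ S])
  show ?thesis using vU span_diff_trans[OF span_diff_trans[OF step1 step2] step3] by (rule that)
qed

lemma tensor_mult_kernel:
  fixes f :: "'n::finite U \<times> 'n U \<Rightarrow> complex"
  assumes f: "f \<in> FSp Usp Omega" and zero: "tensor_mult f = 0"
  shows "f \<in> fun_space.span (bilin_rels Usp Omega)"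
proof -
  obtain v where vU: "\<And>I. v I \<in> Usp"
    and D: "f - (\<Sum>I\<in>UNIV. delta (v I) (wedge_set I)) \<in> fun_space.span (bilin_rels Usp Omega)"
    using tensor_normal_form[OF f] by blast
  define g where "g = (\<Sum>I\<in>UNIV. delta (v I) (wedge_set I))"
  have "fin_supp g" unfolding g_def by (intro fin_supp_sum fin_supp_delta)
  then have "tensor_mult g = 0"
    using fin_supp_tensor_mult_span_bilin_rels[OF D[folded g_def]] zero
    by (simp add: tensor_mult_diff fin_supp_of_FSp[OF f])
  moreover have "tensor_mult g = (\<Sum>I\<in>UNIV. wedge_set I * v I)"
    unfolding g_def by (simp add: tensor_mult_sum fin_supp_delta tensor_mult_delta)
  ultimately have "v I = 0" for I using wedge_set_mult_independent[OF vU] by simp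
  then have "g \<in> fun_space.span (bilin_rels Usp Omega)"
    unfolding g_def
    by (simp add: fun_space.span_sum delta_zero_left_in_span wedge_set_in_Omega U_space.subspace_0[OF subspace_Usp])
  then have "(f - g) + g \<in> fun_space.span (bilin_rels Usp Omega)"
    by (rule fun_space.span_add[OF D[folded g_def]])
  then show ?thesis by (simp only: diff_add_cancel)
qed

lemma tensor_mult_image: "tensor_mult ` FSp Usp Omega = (UNIV :: 'n::finite U set)"
proof -
  have "\<exists>f\<in>FSp Usp Omega. tensor_mult f = z" for z :: "'n U"
  proof -
    have "z \<in> Omega_Usp_span" by (rule in_Omega_Usp_span)
    then show ?thesis unfolding Omega_Usp_span_def
    proof (induction z rule: U_space.span_induct_alt)
      case base
      show ?case by (rule bexI[of _ 0]) (simp_all add: tensor_mult_def FSp_def)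
    next
      case (step c v y)
      then obtain w u where v: "v = w * u" "w \<in> Omega" "u \<in> Usp" by blast
      obtain f where f: "f \<in> FSp Usp Omega" "tensor_mult f = y" using step.IH by blast
      define f' where "f' = fscale c (delta u w) + f"
      have "f' \<in> FSp Usp Omega"
      proof -
        have "{p. f' p \<noteq> 0} \<subseteq> {(u, w)} \<union> {p. f p \<noteq> 0}" by (auto simp: f'_def fscale_def delta_def)
        then show ?thesis using f(1) v unfolding FSp_def by (auto intro: finite_subset)
      qed
      moreover have "tensor_mult f' = scaleU c v + y"
        unfolding f'_def using f v fin_supp_of_FSp[OF f(1)]
        by (simp add: tensor_mult_add fin_supp_scale fin_supp_delta tensor_mult_scale tensor_mult_delta del: plus_fun_apply)
      ultimately show ?case by blast
    qed
  qed
  then show ?thesis by (metis UNIV_eq_I image_eqI)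
qed

lemma tensor_mult_eq_0_iff:
  "f \<in> FSp Usp Omega \<Longrightarrow> tensor_mult f = 0 \<longleftrightarrow> f \<in> RelSp (Usp :: 'n::finite U set) Omega"
  unfolding RelSp_eq_span using tensor_mult_kernel fin_supp_tensor_mult_span_bilin_rels by blast

theorem proposition2:
  shows "(\<forall>a b. act2 a b ` (Omega :: ('n::finite) U set) \<subseteq> Omega) \<and>
         sp_equiv_tensor (Usp :: 'n U set) (Omega :: 'n U set)"
proof
  show "\<forall>a b. act2 a b ` (Omega :: 'n U set) \<subseteq> Omega" using act2_Omega by blast
next
  show "sp_equiv_tensor (Usp :: 'n U set) (Omega :: 'n U set)"
    unfolding sp_equiv_tensor_def
  proof (intro exI[of _ tensor_mult] conjI ballI allI)
    fix f g :: "'n U \<times> 'n U \<Rightarrow> complex" assume "f \<in> FSp Usp Omega" "g \<in> FSp Usp Omega"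
    then show "tensor_mult (\<lambda>p. f p + g p) = tensor_mult f + tensor_mult g"
      using tensor_mult_add[of f g] fin_supp_of_FSp unfolding plus_fun_def by blast
  next
    fix f :: "'n U \<times> 'n U \<Rightarrow> complex" and c assume "f \<in> FSp Usp Omega"
    then show "tensor_mult (\<lambda>p. c * f p) = scaleU c (tensor_mult f)"
      using tensor_mult_scale fin_supp_of_FSp unfolding fscale_def by blast
  next
    show "tensor_mult ` FSp Usp Omega = (UNIV :: 'n U set)" by (rule tensor_mult_image)
  next
    fix f :: "'n U \<times> 'n U \<Rightarrow> complex" assume "f \<in> FSp Usp Omega"
    then show "tensor_mult f = 0 \<longleftrightarrow> f \<in> RelSp Usp Omega" by (rule tensor_mult_eq_0_iff)
  next
    fix a b :: "'n idx" and x y :: "'n U"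
    show "act2 a b (tensor_mult (delta x y)) =
        tensor_mult (delta (act2 a b x) y) + tensor_mult (delta x (act2 a b y))"
      by (simp add: tensor_mult_delta act2_mult add.commute)
  qed
qed

end
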